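(* Let $p\ge1$. For a finite Gaussian mixture $F=\sum_{k=1}^K\alpha_k\mathcal{N}(\mu_k,\Sigma_k)$ on $\mathbb{R}^d$ (with $\alpha_k>0$, $\sum_k\alpha_k=1$, $\mu_k\in\mathbb{R}^d$, $\Sigma_k\in S_d^{++}(\mathbb{R})$), let $G_F$ denote its mixing measure, the finite discrete probability measure on $\mathbb{R}^d\times S_d^{++}(\mathbb{R})$ with $F=f*G_F$ (where $f$ is the Gaussian kernel, i.e. $F=\int\mathcal{N}(\mu,\Sigma)\,dG_F(\mu,\Sigma)$). Then $D(F_1,F_2):=\text{Mix-}SW_p(G_{F_1},G_{F_2})$ is a well-defined metric on the set of finite Gaussian mixtures on $\mathbb{R}^d$.
   Context: $S_d^{++}(\mathbb{R})$ is the set of $d\times d$ real symmetric positive definite matrices, $\log$ the matrix logarithm (via spectral decomposition). Let $\mathbb{S}=\{w\in\mathbb{R}^2:\|w\|_2=1\}$, $\mathbb{S}^{d-1}=\{v\in\mathbb{R}^d:\|v\|_2=1\}$, and let $\mathcal{U}(S_d(\mathbb{R}))$ denote the uniform distribution on the set of real symmetric $d\times d$ matrices $A$ with $\|A\|_F=1$. For $w=(w_1,w_2)\in\mathbb{S}$, $v\in\mathbb{S}^{d-1}$, and such $A$, set $V_w=(w_1v,w_2A)$ and $P_{V_w}(\mu,\Sigma)=w_1\langle\mu,v\rangle+w_2\,\mathrm{Trace}(A\log\Sigma)$. For probability measures $G_1,G_2$ on $\mathbb{R}^d\times S_d^{++}(\mathbb{R})$, $$\text{Mix-}SW_p^p(G_1,G_2)=\mathbb{E}_{(w,v,A)\sim\mathcal{U}(\mathbb{S})\otimes\mathcal{U}(\mathbb{S}^{d-1})\otimes\mathcal{U}(S_d(\mathbb{R}))}\big[W_p^p(P_{V_w}\sharp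 G_1,P_{V_w}\sharp G_2)\big],$$ and $\text{Mix-}SW_p=(\text{Mix-}SW_p^p)^{1/p}$, where $\sharp$ denotes push-forward and $W_p^p(\alpha,\beta)=\inf_{\pi\in\Pi(\alpha,\beta)}\int|x-y|^p\,d\pi(x,y)$ for probability measures on $\mathbb{R}$. *)

theory Defs
  imports "HOL-Analysis.Analysis" "HOL-Probability.Probability"
begin

definition sym_mat :: "real^'n^'n \<Rightarrow> bool" where
  "sym_mat A \<longleftrightarrow> transpose A = A"

definition spd :: "real^'n^'n \<Rightarrow> bool" where
  "spd S \<longleftrightarrow> sym_mat S \<and> (\<forall>x. x \<noteq> 0 \<longrightarrow> x \<bullet> (S *v x) > 0)"

definition diag_mat :: "('n \<Rightarrow> real) \<Rightarrow> real^'n^'n" where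
  "diag_mat d = (\<chi> i j. if i = j then d i else 0)"

definition mat_log :: "real^'n^'n \<Rightarrow> real^'n^'n" where
  "mat_log S = (SOME L. \<exists>U lam. orthogonal_matrix U \<and> (\<forall>i. lam i > 0) \<and>
       S = U ** diag_mat lam ** transpose U \<and>
       L = U ** diag_mat (\<lambda>i. ln (lam i)) ** transpose U)"

definition gauss_pdf :: "real^'n \<Rightarrow> real^'n^'n \<Rightarrow> real^'n \<Rightarrow> real" where
  "gauss_pdf \<mu> S x = (2 * pi) powr (- real CARD('n) / 2) * det S powr (- 1 / 2) *
      exp (- ((x - \<mu>) \<bullet> (matrix_inv S *v (x - \<mu>))) / 2)"

definition mixing_measure :: "((real^'n) \<times> (real^'n^'n)) pmf \<Rightarrow> bool" where
  "mixing_measure G \<longleftrightarrow> finite (set_pmf G) \<and> (\<forall>\<theta>\<in>set_pmf G. spd (snd \<theta>))"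

definition gmm :: "((real^'n) \<times> (real^'n^'n)) pmf \<Rightarrow> (real^'n) measure" where
  "gmm G = density lborel
     (\<lambda>x. ennreal (\<Sum>\<theta>\<in>set_pmf G. pmf G \<theta> * gauss_pdf (fst \<theta>) (snd \<theta>) x))"

text \<open>Uniform (normalised surface) measure on the unit sphere of a Euclidean space:
  radial projection of the uniform distribution on the unit ball.\<close>
definition unif_sphere :: "'a::euclidean_space measure" where
  "unif_sphere = distr (uniform_measure lborel (ball 0 1)) borel (\<lambda>x. x /\<^sub>R norm x)"

definition sym_part :: "real^'n^'n \<Rightarrow> real^'n^'n" where
  "sym_part Z = (1/2) *\<^sub>R (Z + transpose Z)"

text \<open>Uniform distribution on the Frobenius unit sphere of the space of symmetric
  matrices. (The norm on real^n^n is the Frobenius norm.) Obtained by orthogonally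
  projecting the uniform distribution on the unit ball of all matrices onto the
  subspace of symmetric matrices (an O(S_d)-invariant law) and normalising.\<close>
definition unif_sym_sphere :: "(real^'n^'n) measure" where
  "unif_sym_sphere = distr (uniform_measure lborel (ball 0 1)) borel
      (\<lambda>Z. sym_part Z /\<^sub>R norm (sym_part Z))"

definition couplings :: "real measure \<Rightarrow> real measure \<Rightarrow> (real \<times> real) measure set" where
  "couplings \<alpha> \<beta> = {\<pi>. prob_space \<pi> \<and> sets \<pi> = sets borel \<and>
       distr \<pi> borel fst = \<alpha> \<and> distr \<pi> borel snd = \<beta>}"

definition wasserstein_pp :: "real \<Rightarrow> real measure \<Rightarrow> real measure \<Rightarrow> ennreal" where
  "wasserstein_pp p \<alpha> \<beta> =
     (INF \<pi> \<in> couplings \<alpha> \<beta>. \<integral>\<^sup>+ z. ennreal (\<bar>fst z - snd z\<bar> powr p) \<partial>\<pi>)"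

definition proj_V :: "real^2 \<Rightarrow> real^'n \<Rightarrow> real^'n^'n \<Rightarrow> (real^'n) \<times> (real^'n^'n) \<Rightarrow> real" where
  "proj_V w v A \<theta> = w$1 * (fst \<theta> \<bullet> v) + w$2 * trace (A ** mat_log (snd \<theta>))"

definition push :: "real^2 \<Rightarrow> real^'n \<Rightarrow> real^'n^'n \<Rightarrow> ((real^'n) \<times> (real^'n^'n)) pmf \<Rightarrow> real measure" where
  "push w v A G = distr (measure_pmf G) borel (proj_V w v A)"

definition mix_sw_pp :: "real \<Rightarrow> ((real^'n) \<times> (real^'n^'n)) pmf \<Rightarrow> ((real^'n) \<times> (real^'n^'n)) pmf \<Rightarrow> ennreal" where
  "mix_sw_pp p G1 G2 =
     (\<integral>\<^sup>+ u. wasserstein_pp p (push (fst u) (fst (snd u)) (snd (snd u)) G1)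
                               (push (fst u) (fst (snd u)) (snd (snd u)) G2)
        \<partial>(unif_sphere \<Otimes>\<^sub>M (unif_sphere \<Otimes>\<^sub>M (unif_sym_sphere :: (real^'n^'n) measure))))"

definition mix_sw :: "real \<Rightarrow> ((real^'n) \<times> (real^'n^'n)) pmf \<Rightarrow> ((real^'n) \<times> (real^'n^'n)) pmf \<Rightarrow> real" where
  "mix_sw p G1 G2 = enn2real (mix_sw_pp p G1 G2) powr (1 / p)"

end

theory Submission
  imports Defs "HOL-Real_Asymp.Real_Asymp" "HOL-Computational_Algebra.Polynomial"
begin

text \<open>Gaussian densities with distinct parameters are linearly independent: on a generic
  line \<open>t z\<close> they become \<open>exp\<close> of pairwise distinct quadratics in \<open>t\<close>, which can be
  peeled off one by one as \<open>t \<rightarrow> \<infinity>\<close>.  Hence a finite Gaussian mixture determines its mixing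
  measure, and \<open>D(f*G\<^sub>1, f*G\<^sub>2) = Mix-SW\<^sub>p(G\<^sub>1, G\<^sub>2)\<close> is well defined.

  For finitely supported measures, \<open>W\<^sub>p\<close> between projections can be computed with couplings
  of the mixing measures themselves; gluing couplings and Minkowski's inequality give the
  triangle inequality slice by slice, and Minkowski's inequality in \<open>L\<^sup>p\<close> of the random
  direction gives it for the average.  For definiteness, almost every projection
  \<open>(\<mu>, \<Sigma>) \<mapsto> w\<^sub>1\<langle>\<mu>, v\<rangle> + w\<^sub>2\<langle>A, log \<Sigma>\<rangle>\<close> is injective on the finitely many atoms,
  since hyperplanes are null sets and the matrix logarithm is injective on positive
  definite matrices; \<open>W\<^sub>p\<close> of an injective projection vanishes only for equal measures.\<close>

section \<open>Minkowski's inequality\<close>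

lemma convex_comb_powr_le:
  fixes p x y l :: real
  assumes p: "p \<ge> 1" and x: "0 \<le> x" and y: "0 \<le> y" and l: "0 \<le> l" "l \<le> 1"
  shows "(l * x + (1 - l) * y) powr p \<le> l * x powr p + (1 - l) * y powr p"
proof (cases "x > 0 \<and> y > 0")
  case True
  then show ?thesis
    using powr_convex[OF p] l unfolding convex_on_def by (auto simp flip: scaleR_conv_of_real)
next
  case False
  have scale: "(c * z) powr p \<le> c * z powr p" if "0 \<le> c" "c \<le> 1" "0 \<le> z" for c z :: real
  proof -
    have "c powr p \<le> c"
    proof (cases "c = 0")
      case False
      then have "c powr p \<le> c powr 1" using that p by (intro powr_mono') auto
      then show ?thesis using that by simp
    qed simp
    then show ?thesis
      using that by (simp add: powr_mult mult_right_mono)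
  qed
  from False x y consider "x = 0" | "y = 0" by fastforce
  then show ?thesis
    by cases (use scale[of "1 - l" y] scale[of l x] l x y in simp_all)
qed

lemma powr_add_le_convex:
  fixes p x y a b :: real
  assumes p: "p \<ge> 1" and "0 \<le> x" "0 \<le> y" and ab: "a > 0" "b > 0"
  shows "(x + y) powr p \<le> (a + b) powr p * (a / (a + b) * (x / a) powr p + b / (a + b) * (y / b) powr p)"
proof -
  define l where "l = a / (a + b)"
  have l: "0 \<le> l" "l \<le> 1" "1 - l = b / (a + b)" using ab unfolding l_def by (auto simp: field_simps)
  have "l * (x / a) = x / (a + b)" "(1 - l) * (y / b) = y / (a + b)"
    using ab unfolding l(3) unfolding l_def by simp_all
  then have "x + y = (a + b) * (l * (x / a) + (1 - l) * (y / b))"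
    using ab by (simp add: add_divide_distrib[symmetric])
  then have "(x + y) powr p = (a + b) powr p * (l * (x / a) + (1 - l) * (y / b)) powr p"
    using assms l by (simp add: powr_mult)
  also have "\<dots> \<le> (a + b) powr p * (l * (x / a) powr p + (1 - l) * (y / b) powr p)"
    using assms l by (intro mult_left_mono convex_comb_powr_le) auto
  finally show ?thesis unfolding l(3) unfolding l_def .
qed

lemma nn_integral_powr_add_eq_if_zero:
  fixes f g :: "'a \<Rightarrow> real"
  assumes p: "p > 0" and f: "f \<in> borel_measurable M" and f0: "\<And>x. 0 \<le> f x"
    and zero: "(\<integral>\<^sup>+x. ennreal (f x powr p) \<partial>M) = 0"
  shows "(\<integral>\<^sup>+x. ennreal ((f x + g x) powr p) \<partial>M) = (\<integral>\<^sup>+x. ennreal (g x powr p) \<partial>M)"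
proof -
  have "AE x in M. ennreal (f x powr p) = 0"
    using zero f by (simp add: nn_integral_0_iff_AE)
  then have "AE x in M. f x = 0"
    by eventually_elim (use f0 in auto)
  then show ?thesis
    by (intro nn_integral_cong_AE) auto
qed

text \<open>With \<open>a, b\<close> the \<open>L\<^sup>p\<close> norms \<open>A, B\<close> of \<open>f, g\<close>, the right-hand side of
  \<open>powr_add_le_convex\<close> integrates to \<open>(A + B)\<^sup>p\<close>.\<close>
lemma nn_integral_Minkowski:
  fixes f g :: "'a \<Rightarrow> real"
  assumes p: "p \<ge> 1" and f: "f \<in> borel_measurable M" and g: "g \<in> borel_measurable M"
    and f0: "\<And>x. 0 \<le> f x" and g0: "\<And>x. 0 \<le> g x"
    and fin_f: "(\<integral>\<^sup>+x. ennreal (f x powr p) \<partial>M) < \<infinity>"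
    and fin_g: "(\<integral>\<^sup>+x. ennreal (g x powr p) \<partial>M) < \<infinity>"
  shows "(\<integral>\<^sup>+x. ennreal ((f x + g x) powr p) \<partial>M) \<le>
     ennreal ((enn2real (\<integral>\<^sup>+x. ennreal (f x powr p) \<partial>M) powr (1/p) +
               enn2real (\<integral>\<^sup>+x. ennreal (g x powr p) \<partial>M) powr (1/p)) powr p)"
proof -
  define A where "A = enn2real (\<integral>\<^sup>+x. ennreal (f x powr p) \<partial>M) powr (1/p)"
  define B where "B = enn2real (\<integral>\<^sup>+x. ennreal (g x powr p) \<partial>M) powr (1/p)"
  have If: "(\<integral>\<^sup>+x. ennreal (f x powr p) \<partial>M) = ennreal (A powr p)"
    unfolding A_def using fin_f p by (simp add: powr_powr ennreal_enn2real_if less_top)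
  have Ig: "(\<integral>\<^sup>+x. ennreal (g x powr p) \<partial>M) = ennreal (B powr p)"
    unfolding B_def using fin_g p by (simp add: powr_powr ennreal_enn2real_if less_top)
  consider "A = 0" | "B = 0" | "A > 0" "B > 0"
    unfolding A_def B_def by fastforce
  then show ?thesis
  proof cases
    case 1
    then show ?thesis
      using nn_integral_powr_add_eq_if_zero[OF _ f f0] p If Ig unfolding A_def B_def by simp
  next
    case 2
    then show ?thesis
      using nn_integral_powr_add_eq_if_zero[OF _ g g0, of p f] p If Ig unfolding A_def B_def
      by (simp add: add.commute)
  next
    case 3
    define c where "c a = (A + B) powr p * (a / (A + B)) / a powr p" for a
    have c0: "c a \<ge> 0" if "a \<ge> 0" for a unfolding c_def using 3 that by simp
    have "c a * a powr p = (A + B) powr p * (a / (A + B))" if "a > 0" for a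
      unfolding c_def using that by simp
    moreover have "A / (A + B) + B / (A + B) = 1" using 3 by (simp add: add_divide_distrib[symmetric])
    ultimately have sum: "c A * A powr p + c B * B powr p = (A + B) powr p"
      using 3 by (metis distrib_left mult_1_right)
    have "(f x + g x) powr p \<le> c A * f x powr p + c B * g x powr p" for x
      using powr_add_le_convex[OF p f0 g0 3] 3 f0[of x] g0[of x]
      by (simp add: c_def powr_divide field_simps)
    then have "(\<integral>\<^sup>+x. ennreal ((f x + g x) powr p) \<partial>M) \<le>
        (\<integral>\<^sup>+x. ennreal (c A) * ennreal (f x powr p) + ennreal (c B) * ennreal (g x powr p) \<partial>M)"
      using c0 3 by (intro nn_integral_mono) (simp add: ennreal_mult'[symmetric] ennreal_plus[symmetric] del: ennreal_plus)
    also have "\<dots> = ennreal (c A * A powr p + c B * B powr p)"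
      using f g c0 3 by (simp add: nn_integral_add nn_integral_cmult If Ig ennreal_mult' ennreal_plus)
    finally show ?thesis unfolding sum unfolding A_def B_def .
  qed
qed

section \<open>Symmetric and positive definite matrices\<close>

lemma inner_symmetric_matrix:
  fixes S :: "real^'n^'n"
  assumes "transpose S = S"
  shows "(S *v x) \<bullet> y = x \<bullet> (S *v y)"
  by (metis assms dot_lmul_matrix transpose_matrix_vector)

lemma nonpos_if_linear_le_quadratic:
  fixes a k :: real
  assumes "\<And>t. t > 0 \<Longrightarrow> t * a \<le> t\<^sup>2 * k"
  shows "a \<le> 0"
proof (rule ccontr)
  assume "\<not> a \<le> 0"
  define t where "t = a / (\<bar>k\<bar> + 1)"
  have t: "t > 0" unfolding t_def using \<open>\<not> a \<le> 0\<close> by auto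
  have "a \<le> t * k" using assms[OF t] t by (simp add: power2_eq_square mult.assoc)
  also have "\<dots> \<le> t * \<bar>k\<bar>" using t by (intro mult_left_mono) auto
  also have "\<dots> < a" unfolding t_def using \<open>\<not> a \<le> 0\<close> by (simp add: field_simps)
  finally show False by simp
qed

text \<open>First-order optimality of the Rayleigh quotient: the residual \<open>r = S e - M e\<close>
  lies in \<open>V\<close> and is orthogonal to \<open>e\<close>, and moving \<open>e\<close> towards \<open>r\<close> would
  increase the quotient to first order unless \<open>r = 0\<close>.\<close>
lemma rayleigh_maximizer_eigenvector:
  fixes S :: "real^'n^'n"
  assumes sym: "transpose S = S" and V: "subspace V" and inv: "\<And>x. x \<in> V \<Longrightarrow> S *v x \<in> V"
    and e: "e \<in> V" "norm e = 1"
    and max: "\<And>x. x \<in> V \<Longrightarrow> norm x = 1 \<Longrightarrow> x \<bullet> (S *v x) \<le> e \<bullet> (S *v e)"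
  shows "S *v e = (e \<bullet> (S *v e)) *\<^sub>R e"
proof -
  define M where "M = e \<bullet> (S *v e)"
  have quot: "x \<bullet> (S *v x) \<le> M * (x \<bullet> x)" if "x \<in> V" for x
  proof (cases "x = 0")
    case False
    have "x /\<^sub>R norm x \<in> V" using V that by (simp add: subspace_scale)
    then have "(x /\<^sub>R norm x) \<bullet> (S *v (x /\<^sub>R norm x)) \<le> M" unfolding M_def using False by (intro max) auto
    then have "(x \<bullet> (S *v x)) / (norm x)\<^sup>2 \<le> M"
      by (simp add: matrix_vector_mult_scaleR power2_eq_square divide_inverse mult_ac)
    then show ?thesis using False by (simp add: divide_le_eq dot_square_norm mult.commute)
  qed simp
  define r where "r = S *v e - M *\<^sub>R e"
  have rV: "r \<in> V" unfolding r_def using V e inv by (simp add: subspace_diff subspace_scale)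
  have ee: "e \<bullet> e = 1" using e by (simp add: dot_square_norm)
  have re: "r \<bullet> e = 0"
    unfolding r_def M_def using ee by (simp add: inner_diff_left inner_diff_right inner_commute)
  have rSe: "r \<bullet> (S *v e) = r \<bullet> r"
    using re unfolding r_def by (simp add: inner_diff_right)
  have "t * (2 * (r \<bullet> r)) \<le> t\<^sup>2 * (M * (r \<bullet> r) - r \<bullet> (S *v r))" if "t > 0" for t
  proof -
    have "e + t *\<^sub>R r \<in> V" using V e rV by (simp add: subspace_add subspace_scale)
    then have "(e + t *\<^sub>R r) \<bullet> (S *v (e + t *\<^sub>R r)) \<le> M * ((e + t *\<^sub>R r) \<bullet> (e + t *\<^sub>R r))"
      by (rule quot)
    moreover have "e \<bullet> (S *v r) = r \<bullet> (S *v e)"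
      using inner_symmetric_matrix[OF sym, of e r] by (simp add: inner_commute)
    ultimately show ?thesis
      using ee re rSe unfolding M_def
      by (simp add: matrix_vector_right_distrib matrix_vector_mult_scaleR inner_add_left
          inner_add_right inner_commute power2_eq_square algebra_simps)
  qed
  then have "2 * (r \<bullet> r) \<le> 0" by (rule nonpos_if_linear_le_quadratic)
  then have "r = 0" using inner_ge_zero[of r] by simp
  then show ?thesis unfolding r_def M_def by simp
qed

lemma symmetric_matrix_eigenvector_orthogonal:
  fixes S :: "real^'n^'n" and B :: "(real^'n) set"
  assumes sym: "transpose S = S" and fin: "finite B"
    and eig: "\<And>b. b \<in> B \<Longrightarrow> \<exists>c. S *v b = c *\<^sub>R b" and card: "card B < CARD('n)"
  shows "\<exists>e. norm e = 1 \<and> (\<forall>b\<in>B. b \<bullet> e = 0) \<and> (\<exists>c. S *v e = c *\<^sub>R e)"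
proof -
  define V where "V = {x::real^'n. \<forall>b\<in>B. b \<bullet> x = 0}"
  define K where "K = V \<inter> {x. norm x = 1}"
  have V: "subspace V" unfolding V_def subspace_def by (auto simp: inner_add_right)
  have inv: "S *v x \<in> V" if "x \<in> V" for x
  proof -
    have "b \<bullet> (S *v x) = 0" if "b \<in> B" for b
    proof -
      obtain c where "S *v b = c *\<^sub>R b" using eig \<open>b \<in> B\<close> by blast
      then show ?thesis
        using inner_symmetric_matrix[OF sym, of b x] \<open>x \<in> V\<close> \<open>b \<in> B\<close> unfolding V_def by simp
    qed
    then show ?thesis unfolding V_def by blast
  qed
  have "dim (span B) \<le> card B" using fin by (simp add: dim_le_card')
  then have "span B \<noteq> UNIV" using card
    by (metis dim_UNIV dim_span leD DIM_cart DIM_real mult_1_right)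
  then obtain a where a: "a \<noteq> 0" "span B \<subseteq> {x. a \<bullet> x = 0}"
    using span_not_univ_subset_hyperplane by blast
  then have "a /\<^sub>R norm a \<in> K" using span_base[of _ B] unfolding K_def V_def
    by (auto simp: inner_commute)
  then have "K \<noteq> {}" by auto
  moreover have "compact K"
  proof -
    have "V = (\<Inter>b\<in>B. {x. b \<bullet> x = 0})" unfolding V_def by auto
    then have "closed V" by (auto intro: closed_hyperplane)
    then show ?thesis
      unfolding compact_eq_bounded_closed K_def
      by (auto simp: bounded_iff intro!: closed_Int closed_Collect_eq continuous_intros)
  qed
  moreover have "continuous_on K (\<lambda>x. x \<bullet> (S *v x))" by (intro continuous_intros)
  ultimately obtain e where "e \<in> K" and emax: "\<And>x. x \<in> K \<Longrightarrow> x \<bullet> (S *v x) \<le> e \<bullet> (S *v e)"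
    using continuous_attains_sup[of K "\<lambda>x. x \<bullet> (S *v x)"] by blast
  then have "S *v e = (e \<bullet> (S *v e)) *\<^sub>R e"
    by (intro rayleigh_maximizer_eigenvector[OF sym V inv]) (auto simp: K_def)
  then show ?thesis using \<open>e \<in> K\<close> unfolding K_def V_def by blast
qed

lemma symmetric_matrix_orthonormal_eigenvectors:
  fixes S :: "real^'n^'n"
  assumes sym: "transpose S = S" and "k \<le> CARD('n)"
  shows "\<exists>B. finite B \<and> card B = k \<and> (\<forall>b\<in>B. norm b = 1 \<and> (\<exists>c. S *v b = c *\<^sub>R b))
     \<and> (\<forall>b\<in>B. \<forall>b'\<in>B. b \<noteq> b' \<longrightarrow> b \<bullet> b' = 0)"
  using assms(2)
proof (induction k)
  case 0
  then show ?case by (intro exI[of _ "{}"]) auto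
next
  case (Suc k)
  then obtain B where B: "finite B" "card B = k" "\<forall>b\<in>B. norm b = 1 \<and> (\<exists>c. S *v b = c *\<^sub>R b)"
    "\<forall>b\<in>B. \<forall>b'\<in>B. b \<noteq> b' \<longrightarrow> b \<bullet> b' = 0" by auto
  obtain e where e: "norm e = 1" "\<forall>b\<in>B. b \<bullet> e = 0" "\<exists>c. S *v e = c *\<^sub>R e"
    using symmetric_matrix_eigenvector_orthogonal[OF sym B(1)] B Suc.prems by auto
  then have "e \<notin> B" by force
  then show ?case
    by (intro exI[of _ "insert e B"]) (use B e in \<open>auto simp: inner_commute\<close>)
qed

lemma symmetric_matrix_spectral:
  fixes S :: "real^'n^'n"
  assumes sym: "transpose S = S"
  shows "\<exists>U lam. orthogonal_matrix U \<and> (\<forall>j. S *v column j U = lam j *\<^sub>R column j U)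
     \<and> S = U ** diag_mat lam ** transpose U"
proof -
  obtain B where B: "finite B" "card B = CARD('n)" "\<forall>b\<in>B. norm b = 1 \<and> (\<exists>c. S *v b = c *\<^sub>R b)"
    "\<forall>b\<in>B. \<forall>b'\<in>B. b \<noteq> b' \<longrightarrow> b \<bullet> b' = 0"
    using symmetric_matrix_orthonormal_eigenvectors[OF sym, of "CARD('n)"] by auto
  obtain \<phi> :: "'n \<Rightarrow> real^'n" where phi: "bij_betw \<phi> UNIV B"
    using bij_betw_iff_card[of "UNIV::'n set" B] B by auto
  define U :: "real^'n^'n" where "U = (\<chi> i j. \<phi> j $ i)"
  define lam where "lam j = (SOME c. S *v \<phi> j = c *\<^sub>R \<phi> j)" for j
  have phiB: "\<phi> j \<in> B" for j using phi by (auto simp: bij_betw_def)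
  have lam: "S *v \<phi> j = lam j *\<^sub>R \<phi> j" for j
    unfolding lam_def by (rule someI_ex) (use B(3) phiB in auto)
  have col: "column j U = \<phi> j" for j unfolding U_def column_def by (simp add: vec_eq_iff)
  have inner_phi: "\<phi> j \<bullet> \<phi> k = (if j = k then 1 else 0)" for j k
  proof (cases "j = k")
    case False
    then have "\<phi> j \<noteq> \<phi> k" using phi by (auto simp: bij_betw_def inj_def)
    then show ?thesis using B(4) phiB False by auto
  qed (use B(3) phiB in \<open>simp add: dot_square_norm\<close>)
  have "transpose U ** U = mat 1"
    unfolding matrix_matrix_mult_def mat_def transpose_def
    using inner_phi by (simp add: vec_eq_iff U_def inner_vec_def)
  then have orth: "orthogonal_matrix U" by (simp add: orthogonal_matrix)
  have "S ** U = U ** diag_mat lam"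
    using lam by (simp add: vec_eq_iff matrix_matrix_mult_def matrix_vector_mult_def U_def diag_mat_def
        if_distrib if_distribR sum.delta' cong: if_cong)
  then have "U ** diag_mat lam ** transpose U = S ** (U ** transpose U)"
    by (simp add: matrix_mul_assoc)
  also have "\<dots> = S" using orth unfolding orthogonal_matrix_def by simp
  finally show ?thesis using orth lam col by metis
qed

lemma diag_mat_mult_nth: "(diag_mat d ** (C::real^'n^'n)) $ i $ j = d i * C $ i $ j"
  by (simp add: matrix_matrix_mult_def diag_mat_def if_distrib if_distribR sum.delta cong: if_cong)

lemma mult_diag_mat_nth: "((C::real^'n^'n) ** diag_mat d) $ i $ j = C $ i $ j * d j"
  by (simp add: matrix_matrix_mult_def diag_mat_def if_distrib if_distribR sum.delta' cong: if_cong)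

lemma transpose_diag_mat: "transpose (diag_mat d) = (diag_mat d :: real^'n^'n)"
  by (simp add: transpose_def diag_mat_def vec_eq_iff)

text \<open>\<open>a i C\<^sub>i\<^sub>j = C\<^sub>i\<^sub>j b j\<close> forces \<open>a i = b j\<close> wherever \<open>C\<^sub>i\<^sub>j \<noteq> 0\<close>.\<close>
lemma diag_mat_intertwine_comp:
  fixes C :: "real^'n^'n"
  assumes "diag_mat a ** C = C ** diag_mat b"
  shows "diag_mat (g \<circ> a) ** C = C ** diag_mat (g \<circ> b)"
proof -
  have "a i * C $ i $ j = C $ i $ j * b j" for i j
    using arg_cong[OF assms, of "\<lambda>M. M $ i $ j"] by (simp add: diag_mat_mult_nth mult_diag_mat_nth)
  then have "C $ i $ j = 0 \<or> a i = b j" for i j by (auto simp: mult.commute)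
  then have "g (a i) * C $ i $ j = C $ i $ j * g (b j)" for i j
    by (metis mult.commute mult_zero_left)
  then show ?thesis
    by (simp add: vec_eq_iff diag_mat_mult_nth mult_diag_mat_nth)
qed

lemma spd_symmetric: "spd S \<Longrightarrow> transpose S = S"
  unfolding spd_def sym_mat_def by auto

text \<open>In particular the choice in \<open>mat_log_def\<close> is over a nonempty set.\<close>
lemma mat_log_spectral:
  fixes S :: "real^'n^'n"
  assumes "spd S"
  shows "\<exists>U lam. orthogonal_matrix U \<and> (\<forall>i. lam i > 0) \<and>
       S = U ** diag_mat lam ** transpose U \<and>
       mat_log S = U ** diag_mat (\<lambda>i. ln (lam i)) ** transpose U"
proof -
  obtain U lam where U: "orthogonal_matrix U" "\<forall>j. S *v column j U = lam j *\<^sub>R column j U"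
    "S = U ** diag_mat lam ** transpose U"
    using symmetric_matrix_spectral[OF spd_symmetric[OF assms]] by blast
  have "lam j > 0" for j
  proof -
    have "(transpose U ** U) $ j $ j = 1" using U(1) unfolding orthogonal_matrix_def by (simp add: mat_def)
    then have cc: "column j U \<bullet> column j U = 1"
      by (simp add: matrix_matrix_mult_def transpose_def column_def inner_vec_def)
    then have "column j U \<noteq> 0" by auto
    then have "0 < column j U \<bullet> (S *v column j U)" using assms unfolding spd_def by blast
    also have "\<dots> = lam j" using U(2) cc by simp
    finally show ?thesis .
  qed
  then have "\<exists>L. \<exists>U lam. orthogonal_matrix U \<and> (\<forall>i. lam i > 0) \<and>
       S = U ** diag_mat lam ** transpose U \<and> L = U ** diag_mat (\<lambda>i. ln (lam i)) ** transpose U"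
    using U by blast
  then show ?thesis unfolding mat_log_def by (rule someI_ex)
qed

lemma symmetric_mat_log:
  fixes S :: "real^'n^'n"
  assumes "spd S"
  shows "transpose (mat_log S) = mat_log S"
  using mat_log_spectral[OF assms]
  by (auto simp: matrix_transpose_mul transpose_diag_mat matrix_mul_assoc)

lemma mat_log_inj_on_spd: "inj_on (mat_log :: real^'n^'n \<Rightarrow> _) (Collect spd)"
proof (rule inj_onI)
  fix S S' :: "real^'n^'n"
  assume "S \<in> Collect spd" "S' \<in> Collect spd" and log: "mat_log S = mat_log S'"
  then obtain U lam V mu where U: "orthogonal_matrix U" "\<forall>i. lam i > 0"
       "S = U ** diag_mat lam ** transpose U"
       "mat_log S = U ** diag_mat (ln \<circ> lam) ** transpose U"
    and V: "orthogonal_matrix V" "\<forall>i. mu i > 0"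
       "S' = V ** diag_mat mu ** transpose V"
       "mat_log S' = V ** diag_mat (ln \<circ> mu) ** transpose V"
    using mat_log_spectral[of S] mat_log_spectral[of S'] by (auto simp: comp_def)
  have UU: "transpose U ** U = mat 1" "U ** transpose U = mat 1" and VV: "V ** transpose V = mat 1" "transpose V ** V = mat 1"
    using U(1) V(1) unfolding orthogonal_matrix_def by auto
  define C where "C = transpose U ** V"
  have "diag_mat (ln \<circ> lam) ** C = transpose U ** mat_log S ** V"
    unfolding U(4) C_def by (simp add: matrix_mul_assoc) (simp add: matrix_mul_assoc[symmetric] UU)
  also have "\<dots> = C ** diag_mat (ln \<circ> mu)"
    unfolding log V(4) C_def by (simp add: matrix_mul_assoc[symmetric] VV)
  finally have "diag_mat (exp \<circ> (ln \<circ> lam)) ** C = C ** diag_mat (exp \<circ> (ln \<circ> mu))"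
    by (rule diag_mat_intertwine_comp)
  moreover have "exp \<circ> (ln \<circ> lam) = lam" "exp \<circ> (ln \<circ> mu) = mu"
    using U(2) V(2) by auto
  ultimately have DC: "diag_mat lam ** C = C ** diag_mat mu" by simp
  have "S ** V = U ** (diag_mat lam ** C)"
    unfolding U(3) C_def by (simp add: matrix_mul_assoc)
  also have "\<dots> = U ** C ** diag_mat mu" by (simp add: DC matrix_mul_assoc)
  also have "\<dots> = V ** diag_mat mu" unfolding C_def by (metis UU(2) matrix_mul_assoc matrix_mul_lid)
  also have "\<dots> = S' ** V" unfolding V(3) by (simp add: matrix_mul_assoc[symmetric] VV)
  finally have "S ** V ** transpose V = S' ** V ** transpose V" by simp
  then show "S = S'" by (metis VV(1) matrix_mul_assoc matrix_mul_rid)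
qed

lemma spd_invertible:
  fixes S :: "real^'n^'n"
  assumes "spd S"
  shows "invertible S"
proof -
  have "x = 0" if "S *v x = 0" for x
    using assms that unfolding spd_def by force
  then show ?thesis using matrix_left_invertible_ker invertible_left_inverse by blast
qed

lemma spd_matrix_inv:
  fixes S :: "real^'n^'n"
  assumes "spd S"
  shows "S ** matrix_inv S = mat 1" "matrix_inv S ** S = mat 1"
  using someI_ex[OF spd_invertible[OF assms, unfolded invertible_def]]
  unfolding matrix_inv_def by auto

lemma symmetric_matrix_inv_spd:
  fixes S :: "real^'n^'n"
  assumes "spd S"
  shows "transpose (matrix_inv S) = matrix_inv S"
proof -
  have "transpose (matrix_inv S) ** S = mat 1"
    using arg_cong[OF spd_matrix_inv(1)[OF assms], of transpose] spd_symmetric[OF assms]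
    by (simp add: matrix_transpose_mul)
  have "transpose (matrix_inv S) = (transpose (matrix_inv S) ** S) ** matrix_inv S"
    by (metis matrix_mul_assoc matrix_mul_rid spd_matrix_inv(1)[OF assms])
  also have "\<dots> = matrix_inv S" by (simp add: \<open>transpose (matrix_inv S) ** S = mat 1\<close>)
  finally show ?thesis .
qed

lemma matrix_inv_inj_on_spd: "inj_on (matrix_inv :: real^'n^'n \<Rightarrow> _) (Collect spd)"
proof (rule inj_onI)
  fix S S' :: "real^'n^'n"
  assume "S \<in> Collect spd" "S' \<in> Collect spd" and inv: "matrix_inv S = matrix_inv S'"
  then have "S = S ** (matrix_inv S' ** S')" by (simp add: spd_matrix_inv)
  also have "\<dots> = (S ** matrix_inv S) ** S'" using inv by (simp add: matrix_mul_assoc)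
  also have "\<dots> = S'" using \<open>S \<in> Collect spd\<close> by (simp add: spd_matrix_inv)
  finally show "S = S'" .
qed

lemma symmetric_matrix_eq_0_if_quadratic_form_0:
  fixes M :: "real^'n^'n"
  assumes sym: "transpose M = M" and z: "\<And>z. z \<bullet> (M *v z) = 0"
  shows "M = 0"
proof -
  have "M *v y = 0" for y
  proof -
    have "(M *v y + y) \<bullet> (M *v (M *v y + y)) = 0" by (rule z)
    then have "2 * ((M *v y) \<bullet> (M *v y)) = 0"
      using z[of y] z[of "M *v y"] inner_symmetric_matrix[OF sym, of y "M *v y"]
      by (simp add: matrix_vector_right_distrib inner_add_left inner_add_right inner_commute)
    then show ?thesis by simp
  qed
  then show ?thesis by (simp add: matrix_eq)
qed

section \<open>Linear independence of Gaussian densities\<close>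

definition polynomial_on_lines :: "('a::real_vector \<Rightarrow> real) \<Rightarrow> bool" where
  "polynomial_on_lines h \<longleftrightarrow> (\<forall>a d. \<exists>q. \<forall>s. h (a + s *\<^sub>R d) = poly q s)"

lemma polynomial_on_lines_diff:
  "polynomial_on_lines f \<Longrightarrow> polynomial_on_lines g \<Longrightarrow> polynomial_on_lines (\<lambda>z. f z - g z)"
  unfolding polynomial_on_lines_def by (metis poly_diff)

lemma polynomial_on_lines_add:
  "polynomial_on_lines f \<Longrightarrow> polynomial_on_lines g \<Longrightarrow> polynomial_on_lines (\<lambda>z. f z + g z)"
  unfolding polynomial_on_lines_def by (metis poly_add)

lemma polynomial_on_lines_power2:
  "polynomial_on_lines f \<Longrightarrow> polynomial_on_lines (\<lambda>z. (f z)\<^sup>2)"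
  unfolding polynomial_on_lines_def by (metis poly_power)

lemma polynomial_on_lines_inner: "polynomial_on_lines (\<lambda>z. z \<bullet> w)"
  unfolding polynomial_on_lines_def
  by (intro allI exI[of _ "[:_ \<bullet> w, _ \<bullet> w:]"]) (simp add: inner_add_left)

lemma polynomial_on_lines_quadratic_form:
  fixes M :: "real^'n^'n"
  shows "polynomial_on_lines (\<lambda>z. z \<bullet> (M *v z))"
  unfolding polynomial_on_lines_def
proof (intro allI)
  fix a d :: "real^'n"
  show "\<exists>q. \<forall>s. (a + s *\<^sub>R d) \<bullet> (M *v (a + s *\<^sub>R d)) = poly q s"
    by (intro exI[of _ "[:a \<bullet> (M *v a), a \<bullet> (M *v d) + d \<bullet> (M *v a), d \<bullet> (M *v d):]"])
      (simp add: matrix_vector_right_distrib matrix_vector_mult_scaleR inner_add_left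
        inner_add_right algebra_simps)
qed

text \<open>Induction on \<open>F\<close>: on the line from a common non-root \<open>z\<^sub>0\<close> of the old
  functions to a non-root \<open>z\<^sub>1\<close> of the new one, each restriction is a polynomial
  that is nonzero at \<open>s = 0\<close> or at \<open>s = 1\<close>, so all but finitely many points of
  the line are common non-roots.\<close>
lemma polynomial_on_lines_common_nonzero:
  fixes F :: "('a::real_vector \<Rightarrow> real) set"
  assumes "finite F" and "\<And>h. h \<in> F \<Longrightarrow> polynomial_on_lines h \<and> (\<exists>z. h z \<noteq> 0)"
  shows "\<exists>z. \<forall>h\<in>F. h z \<noteq> 0"
  using assms
proof (induction F rule: finite_induct)
  case (insert h F)
  obtain z0 where z0: "\<forall>g\<in>F. g z0 \<noteq> 0" using insert.IH insert.prems by blast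
  obtain z1 where z1: "h z1 \<noteq> 0" using insert.prems by blast
  have "finite {s. g (z0 + s *\<^sub>R (z1 - z0)) = 0}" if g: "g \<in> insert h F" for g
  proof -
    obtain q where q: "\<And>s. g (z0 + s *\<^sub>R (z1 - z0)) = poly q s"
      using insert.prems[OF g] unfolding polynomial_on_lines_def by blast
    have "poly q 0 \<noteq> 0 \<or> poly q 1 \<noteq> 0"
      using g z0 z1 q[of 0] q[of 1] by auto
    then have "q \<noteq> 0" by auto
    then show ?thesis unfolding q by (rule poly_roots_finite)
  qed
  then have "finite (\<Union>g\<in>insert h F. {s. g (z0 + s *\<^sub>R (z1 - z0)) = 0})"
    using insert.hyps by blast
  then obtain s :: real where "s \<notin> (\<Union>g\<in>insert h F. {s. g (z0 + s *\<^sub>R (z1 - z0)) = 0})"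
    using ex_new_if_finite[OF infinite_UNIV_char_0] by blast
  then show ?case by blast
qed simp

lemma exp_quadratic_tendsto_0:
  fixes a b :: real
  assumes "a < 0 \<or> (a = 0 \<and> b < 0)"
  shows "((\<lambda>t. exp (a * t\<^sup>2 + b * t)) \<longlongrightarrow> 0) at_top"
  using assms
proof
  assume "a = 0 \<and> b < 0"
  then show ?thesis by simp real_asymp
qed real_asymp

lemma finite_lex_max:
  fixes a b :: "'a \<Rightarrow> 'b::linorder"
  assumes "finite A" "A \<noteq> {}"
  shows "\<exists>x0\<in>A. \<forall>x\<in>A. a x < a x0 \<or> (a x = a x0 \<and> b x \<le> b x0)"
proof -
  define A1 where "A1 = {x\<in>A. a x = Max (a ` A)}"
  have "Max (a ` A) \<in> a ` A" using assms by (intro Max_in) auto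
  then have "finite A1" "A1 \<noteq> {}" using assms unfolding A1_def by (auto simp: image_iff)
  then have "Max (b ` A1) \<in> b ` A1" by (intro Max_in) auto
  then obtain x0 where "x0 \<in> A1" "b x0 = Max (b ` A1)" by auto
  show ?thesis
  proof (intro bexI[of _ x0] ballI)
    fix x assume "x \<in> A"
    then have "a x \<le> a x0" using assms \<open>x0 \<in> A1\<close> by (simp add: A1_def)
    moreover have "b x \<le> b x0" if "a x = a x0"
      using that \<open>x \<in> A\<close> \<open>x0 \<in> A1\<close> \<open>b x0 = Max (b ` A1)\<close> \<open>finite A1\<close> by (simp add: A1_def)
    ultimately show "a x < a x0 \<or> (a x = a x0 \<and> b x \<le> b x0)" by auto
  qed (use \<open>x0 \<in> A1\<close> in \<open>simp add: A1_def\<close>)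
qed

text \<open>Induction removing the term with the lexicographically largest \<open>(a, b)\<close>: after
  dividing by it, every other term tends to \<open>0\<close> as \<open>t \<rightarrow> \<infinity>\<close>.\<close>
lemma exp_quadratics_linear_independent:
  fixes a b d :: "'a \<Rightarrow> real"
  assumes "finite T" and inj: "inj_on (\<lambda>x. (a x, b x)) T"
    and zero: "\<And>t. (\<Sum>x\<in>T. d x * exp (a x * t\<^sup>2 + b x * t)) = 0"
  shows "\<forall>x\<in>T. d x = 0"
  using assms
proof (induction T rule: finite_remove_induct)
  case (remove A)
  obtain x0 where x0: "x0 \<in> A" "\<forall>x\<in>A. a x < a x0 \<or> (a x = a x0 \<and> b x \<le> b x0)"
    using finite_lex_max[OF remove.hyps(1,2)] by blast
  have less: "a x < a x0 \<or> (a x = a x0 \<and> b x < b x0)" if "x \<in> A - {x0}" for x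
  proof -
    have "(a x, b x) \<noteq> (a x0, b x0)"
      using that x0 remove.prems(1) unfolding inj_on_def by blast
    then show ?thesis using x0(2) that by fastforce
  qed
  have quot: "d x0 + (\<Sum>x\<in>A - {x0}. d x * exp ((a x - a x0) * t\<^sup>2 + (b x - b x0) * t)) = 0" for t
  proof -
    have "(\<Sum>x\<in>A. d x * exp ((a x - a x0) * t\<^sup>2 + (b x - b x0) * t))
        = (\<Sum>x\<in>A. d x * exp (a x * t\<^sup>2 + b x * t)) / exp (a x0 * t\<^sup>2 + b x0 * t)"
      by (simp add: sum_divide_distrib left_diff_distrib exp_diff algebra_simps)
    then show ?thesis
      using remove.prems(2) remove.hyps x0 by (simp add: sum.remove[of A x0])
  qed
  have "((\<lambda>t. d x0 + (\<Sum>x\<in>A - {x0}. d x * exp ((a x - a x0) * t\<^sup>2 + (b x - b x0) * t)))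
      \<longlongrightarrow> d x0 + (\<Sum>x\<in>A - {x0}. d x * 0)) at_top"
    using less by (intro tendsto_intros exp_quadratic_tendsto_0) auto
  then have d0: "d x0 = 0"
    unfolding quot by (simp add: tendsto_const_iff)
  have "\<forall>x\<in>A - {x0}. d x = 0"
  proof (rule remove.IH[OF x0(1)])
    show "inj_on (\<lambda>x. (a x, b x)) (A - {x0})" using remove.prems(1) by (rule inj_on_diff)
    show "(\<Sum>x\<in>A - {x0}. d x * exp (a x * t\<^sup>2 + b x * t)) = 0" for t
      using remove.prems(2)[of t] remove.hyps x0 d0 by (simp add: sum.remove[of A x0])
  qed
  then show ?case using d0 by auto
qed simp

lemma gauss_pdf_on_line:
  fixes S :: "real^'n^'n"
  assumes "transpose (matrix_inv S) = matrix_inv S"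
  defines "P \<equiv> matrix_inv S"
  shows "gauss_pdf \<mu> S (t *\<^sub>R z) =
    ((2 * pi) powr (- real CARD('n) / 2) * det S powr (- 1 / 2) * exp (- (\<mu> \<bullet> (P *v \<mu>)) / 2)) *
    exp ((- (z \<bullet> (P *v z)) / 2) * t\<^sup>2 + (z \<bullet> (P *v \<mu>)) * t)"
proof -
  have "(t *\<^sub>R z - \<mu>) \<bullet> (P *v (t *\<^sub>R z - \<mu>)) =
     t\<^sup>2 * (z \<bullet> (P *v z)) - t * (z \<bullet> (P *v \<mu>) + \<mu> \<bullet> (P *v z)) + \<mu> \<bullet> (P *v \<mu>)"
    by (simp add: matrix_vector_mult_diff_distrib matrix_vector_mult_scaleR inner_diff_left
        inner_diff_right power2_eq_square algebra_simps)
  moreover have "\<mu> \<bullet> (P *v z) = z \<bullet> (P *v \<mu>)"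
    using inner_symmetric_matrix[OF assms(1), of \<mu> z] unfolding P_def by (simp add: inner_commute)
  ultimately have "- ((t *\<^sub>R z - \<mu>) \<bullet> (P *v (t *\<^sub>R z - \<mu>))) / 2 =
     - (\<mu> \<bullet> (P *v \<mu>)) / 2 + ((- (z \<bullet> (P *v z)) / 2) * t\<^sup>2 + (z \<bullet> (P *v \<mu>)) * t)"
    by (simp add: field_simps)
  then show ?thesis unfolding gauss_pdf_def P_def[symmetric] by (simp only: exp_add mult.assoc)
qed

text \<open>Up to a constant factor, the density of \<open>N(\<mu>, \<Sigma>)\<close> on the line \<open>t z\<close> is
  \<open>exp (- a t\<^sup>2 / 2 + b t)\<close> with \<open>(a, b) = gauss_line_params z (\<mu>, \<Sigma>)\<close>
  (see \<open>gauss_pdf_on_line\<close>).\<close>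
definition gauss_line_params :: "real^'n \<Rightarrow> (real^'n) \<times> (real^'n^'n) \<Rightarrow> real \<times> real" where
  "gauss_line_params z \<theta> = (z \<bullet> (matrix_inv (snd \<theta>) *v z), z \<bullet> (matrix_inv (snd \<theta>) *v fst \<theta>))"

lemma gauss_line_params_distinguish:
  fixes \<theta> \<theta>' :: "(real^'n) \<times> (real^'n^'n)"
  assumes spd: "spd (snd \<theta>)" "spd (snd \<theta>')" and "\<theta> \<noteq> \<theta>'"
  shows "\<exists>z. gauss_line_params z \<theta> \<noteq> gauss_line_params z \<theta>'"
proof (cases "snd \<theta> = snd \<theta>'")
  case False
  let ?M = "matrix_inv (snd \<theta>) - matrix_inv (snd \<theta>')"
  have "?M \<noteq> 0"
    using False spd inj_onD[OF matrix_inv_inj_on_spd] by fastforce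
  moreover have "transpose ?M = ?M"
    using symmetric_matrix_inv_spd[OF spd(1)] symmetric_matrix_inv_spd[OF spd(2)]
    by (simp add: transpose_def vec_eq_iff)
  ultimately obtain z where "z \<bullet> (?M *v z) \<noteq> 0"
    using symmetric_matrix_eq_0_if_quadratic_form_0 by blast
  then show ?thesis
    by (intro exI[of _ z]) (simp add: gauss_line_params_def matrix_vector_mult_diff_rdistrib inner_diff_right)
next
  case True
  let ?z = "matrix_inv (snd \<theta>) *v (fst \<theta> - fst \<theta>')"
  have "fst \<theta> \<noteq> fst \<theta>'" using True \<open>\<theta> \<noteq> \<theta>'\<close> by (auto simp: prod_eq_iff)
  moreover have "snd \<theta> *v ?z = fst \<theta> - fst \<theta>'"
    using spd_matrix_inv(1)[OF spd(1)] by (simp add: matrix_vector_mul_assoc)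
  ultimately have "?z \<bullet> ?z \<noteq> 0" by auto
  moreover have "?z \<bullet> ?z = ?z \<bullet> (matrix_inv (snd \<theta>) *v fst \<theta>) - ?z \<bullet> (matrix_inv (snd \<theta>') *v fst \<theta>')"
    using True by (simp add: matrix_vector_mult_diff_distrib inner_diff_right)
  ultimately show ?thesis
    by (intro exI[of _ ?z]) (auto simp: gauss_line_params_def)
qed

text \<open>Two parameters have the same \<open>gauss_line_params z\<close> exactly at the zeros of a sum
  of squares that is polynomial on lines.\<close>
lemma gauss_line_params_inj_on_generic_line:
  fixes T :: "((real^'n) \<times> (real^'n^'n)) set"
  assumes "finite T" and spdT: "\<And>\<theta>. \<theta> \<in> T \<Longrightarrow> spd (snd \<theta>)"
  shows "\<exists>z. inj_on (gauss_line_params z) T"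
proof -
  define sep where "sep \<theta> \<theta>' z = (fst (gauss_line_params z \<theta>) - fst (gauss_line_params z \<theta>'))\<^sup>2
      + (snd (gauss_line_params z \<theta>) - snd (gauss_line_params z \<theta>'))\<^sup>2"
    for \<theta> \<theta>' :: "(real^'n) \<times> (real^'n^'n)" and z
  have sep_eq_0: "sep \<theta> \<theta>' z = 0 \<longleftrightarrow> gauss_line_params z \<theta> = gauss_line_params z \<theta>'" for \<theta> \<theta>' z
    unfolding sep_def by (simp add: sum_power2_eq_zero_iff prod_eq_iff)
  define F where "F = (\<lambda>(\<theta>, \<theta>'). sep \<theta> \<theta>') ` {(\<theta>, \<theta>') \<in> T \<times> T. \<theta> \<noteq> \<theta>'}"
  have "\<exists>z. \<forall>h\<in>F. h z \<noteq> 0"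
  proof (rule polynomial_on_lines_common_nonzero)
    show "finite F" unfolding F_def
      by (rule finite_imageI, rule finite_subset[of _ "T \<times> T"]) (use \<open>finite T\<close> in auto)
    fix h assume "h \<in> F"
    then obtain \<theta> \<theta>' where th: "\<theta> \<in> T" "\<theta>' \<in> T" "\<theta> \<noteq> \<theta>'" and h: "h = sep \<theta> \<theta>'"
      unfolding F_def by auto
    have "polynomial_on_lines h"
      unfolding h sep_def gauss_line_params_def fst_conv snd_conv
      by (intro polynomial_on_lines_add polynomial_on_lines_power2 polynomial_on_lines_diff
          polynomial_on_lines_quadratic_form polynomial_on_lines_inner)
    moreover have "\<exists>z. h z \<noteq> 0"
      using gauss_line_params_distinguish[OF spdT[OF th(1)] spdT[OF th(2)] th(3)]
      unfolding h sep_eq_0 by blast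
    ultimately show "polynomial_on_lines h \<and> (\<exists>z. h z \<noteq> 0)" ..
  qed
  then obtain z where z: "\<forall>h\<in>F. h z \<noteq> 0" by blast
  have "sep \<theta> \<theta>' z \<noteq> 0" if "\<theta> \<in> T" "\<theta>' \<in> T" "\<theta> \<noteq> \<theta>'" for \<theta> \<theta>'
  proof -
    have "sep \<theta> \<theta>' \<in> F" unfolding F_def using that by force
    then show ?thesis using z by blast
  qed
  then show ?thesis unfolding sep_eq_0 inj_on_def by blast
qed

lemma gauss_pdf_linear_independent:
  fixes T :: "((real^'n) \<times> (real^'n^'n)) set" and c :: "(real^'n) \<times> (real^'n^'n) \<Rightarrow> real"
  assumes fin: "finite T" and spdT: "\<And>\<theta>. \<theta> \<in> T \<Longrightarrow> spd (snd \<theta>)"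
    and zero: "\<And>x. (\<Sum>\<theta>\<in>T. c \<theta> * gauss_pdf (fst \<theta>) (snd \<theta>) x) = 0"
  shows "\<forall>\<theta>\<in>T. c \<theta> = 0"
proof -
  define P where "P \<theta> = matrix_inv (snd \<theta>)" for \<theta> :: "(real^'n) \<times> (real^'n^'n)"
  obtain z where inj: "inj_on (gauss_line_params z) T"
    using gauss_line_params_inj_on_generic_line[OF fin spdT] by blast
  define a where "a \<theta> = - (z \<bullet> (P \<theta> *v z)) / 2" for \<theta>
  define b where "b \<theta> = z \<bullet> (P \<theta> *v fst \<theta>)" for \<theta>
  define K where "K \<theta> = (2 * pi) powr (- real CARD('n) / 2) * det (snd \<theta>) powr (- 1 / 2) *
      exp (- (fst \<theta> \<bullet> (P \<theta> *v fst \<theta>)) / 2)" for \<theta>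
  have "K \<theta> \<noteq> 0" if "\<theta> \<in> T" for \<theta>
    using spd_invertible[OF spdT[OF that]] unfolding K_def
    by (auto simp: powr_eq_0_iff invertible_det_nz)
  moreover have "\<forall>\<theta>\<in>T. c \<theta> * K \<theta> = 0"
  proof (rule exp_quadratics_linear_independent[OF fin])
    show "inj_on (\<lambda>\<theta>. (a \<theta>, b \<theta>)) T"
      using inj unfolding a_def b_def P_def gauss_line_params_def inj_on_def by auto
    show "(\<Sum>\<theta>\<in>T. c \<theta> * K \<theta> * exp (a \<theta> * t\<^sup>2 + b \<theta> * t)) = 0" for t
      using zero[of "t *\<^sub>R z"] gauss_pdf_on_line[OF symmetric_matrix_inv_spd[OF spdT]]
      unfolding K_def a_def b_def P_def by (simp add: mult.assoc cong: sum.cong)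
  qed
  ultimately show ?thesis by auto
qed

section \<open>Identifiability of finite Gaussian mixtures\<close>

lemma eq_if_AE_lborel_eq_continuous:
  fixes f g :: "'a::euclidean_space \<Rightarrow> real"
  assumes f: "continuous_on UNIV f" and g: "continuous_on UNIV g" and ae: "AE x in lborel. f x = g x"
  shows "f x = g x"
proof (rule ccontr)
  assume "f x \<noteq> g x"
  moreover have "open {x. f x \<noteq> g x}" using f g by (intro open_Collect_neq) auto
  ultimately obtain e where e: "e > 0" "ball x e \<subseteq> {x. f x \<noteq> g x}"
    using open_contains_ball by blast
  from ae obtain N where N: "{x. f x \<noteq> g x} \<subseteq> N" "emeasure lborel N = 0" "N \<in> sets lborel"
    by (auto elim: AE_E)
  have "emeasure lborel (ball x e) \<le> emeasure lborel N"
    using e N by (intro emeasure_mono) auto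
  moreover have "emeasure lborel (ball x e) > 0"
    using e by (simp add: emeasure_ball unit_ball_vol_pos)
  ultimately show False using N by simp
qed

definition gmm_density :: "((real^'n) \<times> (real^'n^'n)) pmf \<Rightarrow> real^'n \<Rightarrow> real" where
  "gmm_density G x = (\<Sum>\<theta>\<in>set_pmf G. pmf G \<theta> * gauss_pdf (fst \<theta>) (snd \<theta>) x)"

lemma continuous_on_gmm_density: "continuous_on UNIV (gmm_density G)"
proof -
  have "continuous_on UNIV (\<lambda>x. (A::real^'n^'n) *v (x - \<mu>))" for A \<mu>
    by (simp add: matrix_vector_mult_diff_distrib continuous_intros)
  then show ?thesis
    unfolding gmm_density_def gauss_pdf_def by (intro continuous_intros) auto
qed

lemma gmm_density_nonneg: "0 \<le> gmm_density G x"
  unfolding gmm_density_def gauss_pdf_def by (intro sum_nonneg mult_nonneg_nonneg) auto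

lemma inj_on_gmm: "inj_on gmm (Collect mixing_measure :: ((real^'n) \<times> (real^'n^'n)) pmf set)"
proof (rule inj_onI)
  fix G1 G2 :: "((real^'n) \<times> (real^'n^'n)) pmf"
  assume m: "G1 \<in> Collect mixing_measure" "G2 \<in> Collect mixing_measure" and eq: "gmm G1 = gmm G2"
  have meas: "(\<lambda>x. ennreal (gmm_density G x)) \<in> borel_measurable lborel" for G
    using borel_measurable_continuous_onI[OF continuous_on_gmm_density] by measurable
  have "density lborel (\<lambda>x. ennreal (gmm_density G1 x)) = density lborel (\<lambda>x. ennreal (gmm_density G2 x))"
    using eq unfolding gmm_def gmm_density_def .
  then have "AE x in lborel. ennreal (gmm_density G1 x) = ennreal (gmm_density G2 x)"
    using sigma_finite_measure.density_unique_iff[OF lborel.sigma_finite_measure_axioms meas meas] by blast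
  then have "AE x in lborel. gmm_density G1 x = gmm_density G2 x"
    by eventually_elim (simp add: gmm_density_nonneg)
  then have deq: "gmm_density G1 x = gmm_density G2 x" for x
    by (intro eq_if_AE_lborel_eq_continuous continuous_on_gmm_density)
  define T where "T = set_pmf G1 \<union> set_pmf G2"
  have finT: "finite T" and spdT: "\<And>\<theta>. \<theta> \<in> T \<Longrightarrow> spd (snd \<theta>)"
    using m unfolding T_def mixing_measure_def by auto
  have ext: "gmm_density G x = (\<Sum>\<theta>\<in>T. pmf G \<theta> * gauss_pdf (fst \<theta>) (snd \<theta>) x)"
    if "set_pmf G \<subseteq> T" for G x
    unfolding gmm_density_def using that finT
    by (intro sum.mono_neutral_left) (auto simp: set_pmf_iff)
  have diff0: "(\<Sum>\<theta>\<in>T. (pmf G1 \<theta> - pmf G2 \<theta>) * gauss_pdf (fst \<theta>) (snd \<theta>) x) = 0" for x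
    using deq[of x] ext[of G1 x] ext[of G2 x] unfolding T_def
    by (simp add: left_diff_distrib sum_subtractf)
  have "\<forall>\<theta>\<in>T. pmf G1 \<theta> - pmf G2 \<theta> = 0"
    using gauss_pdf_linear_independent[OF finT spdT diff0] .
  then have "pmf G1 \<theta> = pmf G2 \<theta>" for \<theta>
    by (cases "\<theta> \<in> T") (simp_all add: T_def flip: pmf_eq_0_set_pmf)
  then show "G1 = G2" by (rule pmf_eqI)
qed

section \<open>Wasserstein distance between push-forwards of finite discrete measures\<close>

definition pmf_couplings :: "'a pmf \<Rightarrow> 'b pmf \<Rightarrow> ('a \<times> 'b) pmf set" where
  "pmf_couplings G1 G2 = {\<gamma>. map_pmf fst \<gamma> = G1 \<and> map_pmf snd \<gamma> = G2}"

definition coupling_cost :: "real \<Rightarrow> ('a \<Rightarrow> real) \<Rightarrow> ('a \<times> 'a) pmf \<Rightarrow> ennreal" where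
  "coupling_cost p f \<gamma> = (\<integral>\<^sup>+ z. ennreal (\<bar>f (fst z) - f (snd z)\<bar> powr p) \<partial>measure_pmf \<gamma>)"

text \<open>\<open>W\<^sub>p\<^sup>p(f\<sharp>G\<^sub>1, f\<sharp>G\<^sub>2)\<close>, computed with couplings of \<open>G\<^sub>1\<close> and \<open>G\<^sub>2\<close>
  themselves rather than of their push-forwards (they agree by
  \<open>wasserstein_pp_distr_eq_pmf_wasserstein\<close>).\<close>
definition pmf_wasserstein :: "real \<Rightarrow> ('a \<Rightarrow> real) \<Rightarrow> 'a pmf \<Rightarrow> 'a pmf \<Rightarrow> ennreal" where
  "pmf_wasserstein p f G1 G2 = (INF \<gamma> \<in> pmf_couplings G1 G2. coupling_cost p f \<gamma>)"

lemma set_pmf_coupling: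
  "\<gamma> \<in> pmf_couplings G1 G2 \<Longrightarrow> set_pmf \<gamma> \<subseteq> set_pmf G1 \<times> set_pmf G2"
  unfolding pmf_couplings_def by force

lemma pair_pmf_coupling: "pair_pmf G1 G2 \<in> pmf_couplings G1 G2"
  unfolding pmf_couplings_def by (simp add: map_fst_pair_pmf map_snd_pair_pmf)

lemma coupling_cost_finite_sum:
  assumes "finite (set_pmf \<gamma>)"
  shows "coupling_cost p f \<gamma> = ennreal (\<Sum>z\<in>set_pmf \<gamma>. \<bar>f (fst z) - f (snd z)\<bar> powr p * pmf \<gamma> z)"
proof -
  have "coupling_cost p f \<gamma> = (\<Sum>z\<in>set_pmf \<gamma>. ennreal (\<bar>f (fst z) - f (snd z)\<bar> powr p) * ennreal (pmf \<gamma> z))"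
    unfolding coupling_cost_def by (rule nn_integral_measure_pmf_finite) (use assms in auto)
  also have "\<dots> = (\<Sum>z\<in>set_pmf \<gamma>. ennreal (\<bar>f (fst z) - f (snd z)\<bar> powr p * pmf \<gamma> z))"
    by (simp add: ennreal_mult)
  also have "\<dots> = ennreal (\<Sum>z\<in>set_pmf \<gamma>. \<bar>f (fst z) - f (snd z)\<bar> powr p * pmf \<gamma> z)"
    by (rule sum_ennreal) simp
  finally show ?thesis .
qed

lemma finite_set_pmf_coupling:
  assumes "\<gamma> \<in> pmf_couplings G1 G2" "finite (set_pmf G1)" "finite (set_pmf G2)"
  shows "finite (set_pmf \<gamma>)"
  using set_pmf_coupling[OF assms(1)] assms(2,3) by (rule finite_subset[OF _ finite_SigmaI])

lemma coupling_cost_finite: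
  assumes "\<gamma> \<in> pmf_couplings G1 G2" "finite (set_pmf G1)" "finite (set_pmf G2)"
  shows "coupling_cost p f \<gamma> < \<infinity>"
  by (simp add: coupling_cost_finite_sum finite_set_pmf_coupling[OF assms])

lemma borel_measurable_fst_real: "(fst :: real \<times> real \<Rightarrow> real) \<in> borel_measurable borel"
  by (intro borel_measurable_continuous_onI continuous_intros)

lemma borel_measurable_snd_real: "(snd :: real \<times> real \<Rightarrow> real) \<in> borel_measurable borel"
  by (intro borel_measurable_continuous_onI continuous_intros)

lemma borel_measurable_dist_powr:
  "(\<lambda>z::real \<times> real. ennreal (\<bar>fst z - snd z\<bar> powr p)) \<in> borel_measurable borel"
proof -
  have "(\<lambda>z::real \<times> real. \<bar>fst z - snd z\<bar> powr p) \<in> borel_measurable borel"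
    by (intro measurable_abs_powr borel_measurable_diff borel_measurable_fst_real borel_measurable_snd_real)
  then show ?thesis by (rule measurable_compose) simp
qed

lemma wasserstein_pp_le_coupling_cost:
  assumes "\<gamma> \<in> pmf_couplings G1 G2"
  shows "wasserstein_pp p (distr (measure_pmf G1) borel f) (distr (measure_pmf G2) borel f)
    \<le> coupling_cost p f \<gamma>"
proof -
  define \<pi> where "\<pi> = distr (measure_pmf \<gamma>) borel (map_prod f f)"
  have marg: "distr \<pi> borel g = distr (measure_pmf (map_pmf h \<gamma>)) borel f"
    if "g \<circ> map_prod f f = f \<circ> h" and "g \<in> borel_measurable borel" for g :: "real \<times> real \<Rightarrow> real" and h
    unfolding \<pi>_def map_pmf_rep_eq using that by (simp add: distr_distr)
  have G: "map_pmf fst \<gamma> = G1" "map_pmf snd \<gamma> = G2"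
    using assms unfolding pmf_couplings_def by auto
  have cpl: "\<pi> \<in> couplings (distr (measure_pmf G1) borel f) (distr (measure_pmf G2) borel f)"
    unfolding couplings_def
  proof (intro CollectI conjI)
    show "prob_space \<pi>" unfolding \<pi>_def by (intro measure_pmf.prob_space_distr) auto
    show "distr \<pi> borel fst = distr (measure_pmf G1) borel f"
      using marg[OF _ borel_measurable_fst_real, of fst] G by (simp add: comp_def)
    show "distr \<pi> borel snd = distr (measure_pmf G2) borel f"
      using marg[OF _ borel_measurable_snd_real, of snd] G by (simp add: comp_def)
  qed (simp add: \<pi>_def)
  have "wasserstein_pp p (distr (measure_pmf G1) borel f) (distr (measure_pmf G2) borel f)
      \<le> (\<integral>\<^sup>+ z. ennreal (\<bar>fst z - snd z\<bar> powr p) \<partial>\<pi>)"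
    unfolding wasserstein_pp_def by (rule INF_lower[OF cpl])
  also have "\<dots> = coupling_cost p f \<gamma>"
    unfolding \<pi>_def coupling_cost_def
    by (subst nn_integral_distr) (simp_all add: borel_measurable_dist_powr)
  finally show ?thesis .
qed

lemma measure_eq_distr_pmf_if_finite_support:
  fixes M :: "'a::t1_space measure"
  assumes "prob_space M" and sets: "sets M = sets borel" and X: "finite X" "AE x in M. x \<in> X"
  shows "\<exists>\<rho>. set_pmf \<rho> \<subseteq> X \<and> M = distr (measure_pmf \<rho>) borel (\<lambda>x. x)"
proof -
  interpret prob_space M by fact
  have sets_finite: "A \<in> sets M" if "finite A" for A
    using that sets by (simp add: borel_closed finite_imp_closed)
  define w where "w z = (if z \<in> X then measure M {z} else 0)" for z
  have emeasure_subset: "emeasure M A = (\<Sum>z\<in>A. ennreal (w z))" if "A \<subseteq> X" for A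
  proof -
    have "emeasure M A = (\<Sum>z\<in>A. emeasure M {z})"
      using that X(1) sets_finite by (intro emeasure_eq_sum_singleton) (auto intro: finite_subset)
    also have "\<dots> = (\<Sum>z\<in>A. ennreal (w z))"
      using that unfolding w_def by (intro sum.cong) (auto simp: emeasure_eq_measure)
    finally show ?thesis .
  qed
  have "(\<integral>\<^sup>+ z. ennreal (w z) \<partial>count_space UNIV) = (\<Sum>z\<in>X. ennreal (w z))"
    using X(1) by (subst nn_integral_count_space') (auto simp: w_def)
  also have "\<dots> = 1"
    using emeasure_subset[of X] emeasure_eq_1_AE[OF sets_finite[OF X(1)] X(2)] by simp
  finally have w_sum: "(\<integral>\<^sup>+ z. ennreal (w z) \<partial>count_space UNIV) = 1" .
  define \<rho> where "\<rho> = embed_pmf w"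
  have pmf_rho: "pmf \<rho> z = w z" for z unfolding \<rho>_def using w_sum by (simp add: pmf_embed_pmf w_def)
  have set_rho: "set_pmf \<rho> \<subseteq> X" unfolding set_pmf_eq pmf_rho by (auto simp: w_def)
  have "M = distr (measure_pmf \<rho>) borel (\<lambda>x. x)"
  proof (rule measure_eqI)
    fix A assume "A \<in> sets M"
    have "emeasure M A = emeasure M (A \<inter> X)"
      using X(2) \<open>A \<in> sets M\<close> sets_finite[of "A \<inter> X"] X(1) by (intro emeasure_eq_AE) auto
    also have "\<dots> = emeasure (measure_pmf \<rho>) (A \<inter> X)"
      using X(1) by (simp add: emeasure_subset emeasure_measure_pmf_finite pmf_rho sum_ennreal w_def)
    also have "\<dots> = emeasure (measure_pmf \<rho>) A"
    proof -
      have "A \<inter> X \<inter> set_pmf \<rho> = A \<inter> set_pmf \<rho>" using set_rho by blast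
      then show ?thesis by (metis emeasure_Int_set_pmf)
    qed
    finally show "emeasure M A = emeasure (distr (measure_pmf \<rho>) borel (\<lambda>x. x)) A"
      using \<open>A \<in> sets M\<close> sets by (simp add: emeasure_distr)
  qed (simp add: sets)
  then show ?thesis using set_rho by blast
qed

lemma map_pmf_eq_if_distr_eq:
  fixes g :: "'a \<Rightarrow> 'c::t1_space" and h :: "'b \<Rightarrow> 'c"
  assumes "distr (measure_pmf p) borel g = distr (measure_pmf q) borel h"
  shows "map_pmf g p = map_pmf h q"
proof (rule pmf_eqI)
  fix x
  have "ennreal (pmf (map_pmf g p) x) = emeasure (distr (measure_pmf p) borel g) {x}"
    by (simp add: ennreal_pmf_map emeasure_distr vimage_def)
  also have "\<dots> = ennreal (pmf (map_pmf h q) x)"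
    unfolding assms by (simp add: ennreal_pmf_map emeasure_distr vimage_def)
  finally show "pmf (map_pmf g p) x = pmf (map_pmf h q) x" by simp
qed

text \<open>A coupling of \<open>f\<sharp>G\<^sub>1\<close> and \<open>f\<sharp>G\<^sub>2\<close> lifts to a coupling of \<open>G\<^sub>1\<close> and
  \<open>G\<^sub>2\<close> by distributing each atom \<open>(x, y)\<close> over the fibres
  \<open>f\<^sup>-\<^sup>1{x}\<close>, \<open>f\<^sup>-\<^sup>1{y}\<close> according to the conditional laws.\<close>
lemma pmf_coupling_lift:
  assumes fst: "map_pmf fst \<rho> = map_pmf f G1" and snd: "map_pmf snd \<rho> = map_pmf f G2"
  shows "\<exists>\<gamma>\<in>pmf_couplings G1 G2. map_pmf (map_prod f f) \<gamma> = \<rho>"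
proof -
  define C where "C G x = cond_pmf G {\<theta>. f \<theta> = x}" for G x
  define \<gamma> where "\<gamma> = bind_pmf \<rho> (\<lambda>z. pair_pmf (C G1 (fst z)) (C G2 (snd z)))"
  have cancel: "bind_pmf (map_pmf f G) (C G) = G" for G
    unfolding C_def by (rule bind_cond_pmf_cancel) (auto simp: measure_map_pmf vimage_def)
  have nonempty: "set_pmf G \<inter> {\<theta>. f \<theta> = x} \<noteq> {}" if "x \<in> set_pmf (map_pmf f G)" for G x
    using that by auto
  have "map_pmf fst \<gamma> = bind_pmf (map_pmf fst \<rho>) (C G1)"
    unfolding \<gamma>_def map_bind_pmf map_fst_pair_pmf bind_map_pmf ..
  moreover have "map_pmf snd \<gamma> = bind_pmf (map_pmf snd \<rho>) (C G2)"
    unfolding \<gamma>_def map_bind_pmf map_snd_pair_pmf bind_map_pmf ..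
  moreover have "map_pmf (map_prod f f) \<gamma> = bind_pmf \<rho> return_pmf"
    unfolding \<gamma>_def map_bind_pmf
  proof (rule bind_pmf_cong[OF refl])
    fix z assume "z \<in> set_pmf \<rho>"
    then have "fst z \<in> set_pmf (map_pmf f G1)" "snd z \<in> set_pmf (map_pmf f G2)"
      unfolding fst[symmetric] snd[symmetric] by auto
    then have "map_prod f f u = z" if "u \<in> set_pmf (pair_pmf (C G1 (fst z)) (C G2 (snd z)))" for u
      using that unfolding C_def by (auto simp: set_cond_pmf[OF nonempty] prod_eq_iff)
    then show "map_pmf (map_prod f f) (pair_pmf (C G1 (fst z)) (C G2 (snd z))) = return_pmf z"
      by (intro map_pmf_eq_return_pmf_iff[THEN iffD2]) auto
  qed
  ultimately show ?thesis
    using cancel unfolding pmf_couplings_def fst snd by (auto simp: bind_return_pmf')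
qed

lemma AE_distr_pmf_in_image:
  fixes f :: "'a \<Rightarrow> 'b::t1_space"
  assumes "finite (set_pmf G)"
  shows "AE x in distr (measure_pmf G) borel f. x \<in> f ` set_pmf G"
  using assms by (subst AE_distr_iff) (auto simp: AE_measure_pmf_iff borel_closed finite_imp_closed)

lemma AE_coupling_distr_pmf:
  fixes f :: "'a \<Rightarrow> real"
  assumes \<pi>: "\<pi> \<in> couplings (distr (measure_pmf G1) borel f) (distr (measure_pmf G2) borel f)"
    and fin: "finite (set_pmf G1)" "finite (set_pmf G2)"
  shows "AE z in \<pi>. z \<in> f ` set_pmf G1 \<times> f ` set_pmf G2"
proof -
  from \<pi> have sets: "sets \<pi> = sets borel" and marg: "distr \<pi> borel fst = distr (measure_pmf G1) borel f"
    "distr \<pi> borel snd = distr (measure_pmf G2) borel f"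
    unfolding couplings_def by auto
  have AE_marg: "AE z in \<pi>. g z \<in> f ` set_pmf G"
    if "distr \<pi> borel g = distr (measure_pmf G) borel f" "finite (set_pmf G)"
      and "g \<in> borel_measurable borel" for g :: "real \<times> real \<Rightarrow> real" and G
  proof -
    have "{x \<in> space borel. x \<in> f ` set_pmf G} \<in> sets borel"
      using that(2) by (simp add: borel_closed finite_imp_closed)
    moreover have "AE x in distr \<pi> borel g. x \<in> f ` set_pmf G"
      unfolding that(1) using that(2) by (rule AE_distr_pmf_in_image)
    moreover have "g \<in> measurable \<pi> borel" using that(3) measurable_cong_sets[OF sets refl] by blast
    ultimately show ?thesis by (simp add: AE_distr_iff)
  qed
  have "AE z in \<pi>. fst z \<in> f ` set_pmf G1" "AE z in \<pi>. snd z \<in> f ` set_pmf G2"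
    using AE_marg[OF marg(1) fin(1) borel_measurable_fst_real]
      AE_marg[OF marg(2) fin(2) borel_measurable_snd_real] by auto
  then show ?thesis by eventually_elim auto
qed

lemma pmf_wasserstein_le_coupling_cost:
  "\<gamma> \<in> pmf_couplings G1 G2 \<Longrightarrow> pmf_wasserstein p f G1 G2 \<le> coupling_cost p f \<gamma>"
  unfolding pmf_wasserstein_def by (rule INF_lower)

lemma pmf_wasserstein_le_coupling_distr_pmf:
  fixes f :: "'a \<Rightarrow> real"
  assumes \<pi>: "\<pi> \<in> couplings (distr (measure_pmf G1) borel f) (distr (measure_pmf G2) borel f)"
    and fin: "finite (set_pmf G1)" "finite (set_pmf G2)"
  shows "pmf_wasserstein p f G1 G2 \<le> (\<integral>\<^sup>+ z. ennreal (\<bar>fst z - snd z\<bar> powr p) \<partial>\<pi>)"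
proof -
  from \<pi> have sets: "sets \<pi> = sets borel" and marg: "distr \<pi> borel fst = distr (measure_pmf G1) borel f"
    "distr \<pi> borel snd = distr (measure_pmf G2) borel f" and "prob_space \<pi>"
    unfolding couplings_def by auto
  moreover have "finite (f ` set_pmf G1 \<times> f ` set_pmf G2)" using fin by simp
  ultimately obtain \<rho> where \<rho>: "\<pi> = distr (measure_pmf \<rho>) borel (\<lambda>x. x)"
    using measure_eq_distr_pmf_if_finite_support[OF _ sets _ AE_coupling_distr_pmf[OF \<pi> fin]] by blast
  have "distr (measure_pmf \<rho>) borel fst = distr (measure_pmf G1) borel f"
    "distr (measure_pmf \<rho>) borel snd = distr (measure_pmf G2) borel f"
    using marg unfolding \<rho>
    by (simp_all add: distr_distr comp_def borel_measurable_fst_real borel_measurable_snd_real)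
  then have "map_pmf fst \<rho> = map_pmf f G1" "map_pmf snd \<rho> = map_pmf f G2"
    using map_pmf_eq_if_distr_eq by blast+
  then obtain \<gamma> where \<gamma>: "\<gamma> \<in> pmf_couplings G1 G2" "map_pmf (map_prod f f) \<gamma> = \<rho>"
    using pmf_coupling_lift by blast
  have "pmf_wasserstein p f G1 G2 \<le> coupling_cost p f \<gamma>"
    by (rule pmf_wasserstein_le_coupling_cost[OF \<gamma>(1)])
  also have "\<dots> = (\<integral>\<^sup>+ z. ennreal (\<bar>fst z - snd z\<bar> powr p) \<partial>\<pi>)"
    unfolding coupling_cost_def \<rho> \<gamma>(2)[symmetric]
    by (subst nn_integral_distr) (simp_all add: borel_measurable_dist_powr nn_integral_map_pmf)
  finally show ?thesis .
qed

lemma wasserstein_pp_distr_eq_pmf_wasserstein: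
  fixes f :: "'a \<Rightarrow> real"
  assumes fin: "finite (set_pmf G1)" "finite (set_pmf G2)"
  shows "wasserstein_pp p (distr (measure_pmf G1) borel f) (distr (measure_pmf G2) borel f)
    = pmf_wasserstein p f G1 G2"
proof (rule antisym)
  show "wasserstein_pp p (distr (measure_pmf G1) borel f) (distr (measure_pmf G2) borel f)
      \<le> pmf_wasserstein p f G1 G2"
    unfolding pmf_wasserstein_def by (intro INF_greatest wasserstein_pp_le_coupling_cost)
  show "pmf_wasserstein p f G1 G2
      \<le> wasserstein_pp p (distr (measure_pmf G1) borel f) (distr (measure_pmf G2) borel f)"
    unfolding wasserstein_pp_def by (intro INF_greatest pmf_wasserstein_le_coupling_distr_pmf fin)
qed

lemma pmf_wasserstein_finite:
  assumes "finite (set_pmf G1)" "finite (set_pmf G2)"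
  shows "pmf_wasserstein p f G1 G2 < \<infinity>"
  using pmf_wasserstein_le_coupling_cost[OF pair_pmf_coupling]
    coupling_cost_finite[OF pair_pmf_coupling assms] by (rule le_less_trans)

lemma pmf_wasserstein_self:
  assumes "p > 0"
  shows "pmf_wasserstein p f G G = 0"
proof -
  have "map_pmf (\<lambda>x. (x, x)) G \<in> pmf_couplings G G"
    unfolding pmf_couplings_def by (simp add: pmf.map_comp o_def)
  moreover have "coupling_cost p f (map_pmf (\<lambda>x. (x, x)) G) = 0"
    unfolding coupling_cost_def using assms by simp
  ultimately show ?thesis using pmf_wasserstein_le_coupling_cost by (metis le_zero_eq)
qed

lemma pmf_wasserstein_le_diameter:
  assumes "p > 0" and R: "\<And>\<theta>. \<theta> \<in> set_pmf G1 \<union> set_pmf G2 \<Longrightarrow> \<bar>f \<theta>\<bar> \<le> R"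
  shows "pmf_wasserstein p f G1 G2 \<le> ennreal ((2 * R) powr p)"
proof -
  have "pmf_wasserstein p f G1 G2 \<le> coupling_cost p f (pair_pmf G1 G2)"
    by (rule pmf_wasserstein_le_coupling_cost[OF pair_pmf_coupling])
  also have "\<dots> \<le> (\<integral>\<^sup>+ z. ennreal ((2 * R) powr p) \<partial>measure_pmf (pair_pmf G1 G2))"
    unfolding coupling_cost_def
  proof (intro nn_integral_mono_AE, unfold AE_measure_pmf_iff, intro ballI)
    fix z assume "z \<in> set_pmf (pair_pmf G1 G2)"
    then have "\<bar>f (fst z) - f (snd z)\<bar> \<le> 2 * R"
      using R[of "fst z"] R[of "snd z"] by (auto simp: set_pair_pmf)
    then show "ennreal (\<bar>f (fst z) - f (snd z)\<bar> powr p) \<le> ennreal ((2 * R) powr p)"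
      using assms(1) by (intro ennreal_leI powr_mono2) auto
  qed
  also have "\<dots> = ennreal ((2 * R) powr p)" by simp
  finally show ?thesis .
qed

lemma borel_measurable_pmf_wasserstein:
  fixes F :: "'u::topological_space \<Rightarrow> 'a \<Rightarrow> real"
  assumes cont: "\<And>\<theta>. continuous_on UNIV (\<lambda>u. F u \<theta>)" and "p > 0"
    and fin: "finite (set_pmf G1)" "finite (set_pmf G2)" and sets: "sets M = sets borel"
  shows "(\<lambda>u. pmf_wasserstein p (F u) G1 G2) \<in> borel_measurable M"
proof (rule borel_measurableI_less)
  fix y
  have "open {u. coupling_cost p (F u) \<gamma> < y}" if \<gamma>: "\<gamma> \<in> pmf_couplings G1 G2" for \<gamma>
  proof -
    have "continuous_on UNIV (\<lambda>u. ennreal (\<Sum>z\<in>set_pmf \<gamma>. \<bar>F u (fst z) - F u (snd z)\<bar> powr p * pmf \<gamma> z))"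
      using \<open>p > 0\<close> by (intro continuous_on_ennreal continuous_on_sum continuous_on_mult
          continuous_on_powr' continuous_on_const continuous_on_rabs continuous_on_diff cont) auto
    then have "open {u. ennreal (\<Sum>z\<in>set_pmf \<gamma>. \<bar>F u (fst z) - F u (snd z)\<bar> powr p * pmf \<gamma> z) < y}"
      by (intro open_Collect_less continuous_on_const)
    then show ?thesis using coupling_cost_finite_sum[OF finite_set_pmf_coupling[OF \<gamma> fin]] by simp
  qed
  moreover have "{u \<in> space M. pmf_wasserstein p (F u) G1 G2 < y} =
      (\<Union>\<gamma>\<in>pmf_couplings G1 G2. {u. coupling_cost p (F u) \<gamma> < y})"
    using sets_eq_imp_space_eq[OF sets] unfolding pmf_wasserstein_def by (auto simp: INF_less_iff)
  ultimately show "{u \<in> space M. pmf_wasserstein p (F u) G1 G2 < y} \<in> sets M"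
    unfolding sets by (auto intro: borel_open)
qed

text \<open>The gluing lemma: \<open>\<gamma>\<^sub>2\<^sub>3\<close> is disintegrated along its first coordinate and
  attached to \<open>\<gamma>\<^sub>1\<^sub>2\<close> through the shared middle marginal.\<close>
lemma pmf_couplings_glue:
  assumes g12: "\<gamma>12 \<in> pmf_couplings G1 G2" and g23: "\<gamma>23 \<in> pmf_couplings G2 G3"
  shows "\<exists>\<gamma>. map_pmf (\<lambda>t. (fst t, fst (snd t))) \<gamma> = \<gamma>12 \<and> map_pmf snd \<gamma> = \<gamma>23"
proof -
  define C where "C b = cond_pmf \<gamma>23 {y. fst y = b}" for b
  define \<gamma> where "\<gamma> = bind_pmf \<gamma>12 (\<lambda>z. map_pmf (\<lambda>y. (fst z, snd z, snd y)) (C (snd z)))"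
  have s12: "map_pmf snd \<gamma>12 = G2" and f23: "map_pmf fst \<gamma>23 = G2"
    using g12 g23 unfolding pmf_couplings_def by auto
  have first: "map_pmf (\<lambda>t. (fst t, fst (snd t))) \<gamma> = \<gamma>12"
    unfolding \<gamma>_def map_bind_pmf pmf.map_comp o_def by (simp add: map_pmf_const bind_return_pmf')
  have "map_pmf snd \<gamma> = bind_pmf \<gamma>12 (\<lambda>z. map_pmf (\<lambda>y. (snd z, snd y)) (C (snd z)))"
    unfolding \<gamma>_def map_bind_pmf pmf.map_comp o_def by simp
  also have "\<dots> = bind_pmf \<gamma>12 (\<lambda>z. C (snd z))"
  proof (rule bind_pmf_cong[OF refl])
    fix z assume "z \<in> set_pmf \<gamma>12"
    then have "snd z \<in> fst ` set_pmf \<gamma>23" using s12 f23 by (metis set_map_pmf imageI)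
    then have ne: "set_pmf \<gamma>23 \<inter> {y. fst y = snd z} \<noteq> {}" by auto
    show "map_pmf (\<lambda>y. (snd z, snd y)) (C (snd z)) = C (snd z)"
      unfolding C_def by (rule map_pmf_idI) (auto simp: set_cond_pmf[OF ne])
  qed
  also have "\<dots> = bind_pmf G2 C"
    unfolding s12[symmetric] bind_map_pmf ..
  also have "\<dots> = \<gamma>23"
    unfolding C_def f23[symmetric]
    by (rule bind_cond_pmf_cancel) (auto simp: measure_map_pmf vimage_def)
  finally show ?thesis using first by blast
qed

lemma coupling_cost_glue:
  assumes p: "p \<ge> 1" and g12: "\<gamma>12 \<in> pmf_couplings G1 G2" and g23: "\<gamma>23 \<in> pmf_couplings G2 G3"
    and fin: "finite (set_pmf G1)" "finite (set_pmf G2)" "finite (set_pmf G3)"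
  shows "\<exists>\<gamma>13\<in>pmf_couplings G1 G3. coupling_cost p f \<gamma>13 \<le>
     ennreal ((enn2real (coupling_cost p f \<gamma>12) powr (1/p) + enn2real (coupling_cost p f \<gamma>23) powr (1/p)) powr p)"
proof -
  obtain \<gamma> where g1: "map_pmf (\<lambda>t. (fst t, fst (snd t))) \<gamma> = \<gamma>12" and g2: "map_pmf snd \<gamma> = \<gamma>23"
    using pmf_couplings_glue[OF g12 g23] by blast
  define \<gamma>13 where "\<gamma>13 = map_pmf (\<lambda>t. (fst t, snd (snd t))) \<gamma>"
  have "map_pmf fst \<gamma>13 = map_pmf fst \<gamma>12" "map_pmf snd \<gamma>13 = map_pmf snd \<gamma>23"
    unfolding \<gamma>13_def g1[symmetric] g2[symmetric] pmf.map_comp o_def by simp_all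
  then have c13: "\<gamma>13 \<in> pmf_couplings G1 G3" using g12 g23 unfolding pmf_couplings_def by auto
  define F where "F t = \<bar>f (fst t) - f (fst (snd t))\<bar>" for t :: "'a \<times> 'a \<times> 'a"
  define H where "H t = \<bar>f (fst (snd t)) - f (snd (snd t))\<bar>" for t :: "'a \<times> 'a \<times> 'a"
  have cF: "(\<integral>\<^sup>+ t. ennreal (F t powr p) \<partial>measure_pmf \<gamma>) = coupling_cost p f \<gamma>12"
    unfolding coupling_cost_def g1[symmetric] F_def by (simp add: nn_integral_map_pmf)
  have cH: "(\<integral>\<^sup>+ t. ennreal (H t powr p) \<partial>measure_pmf \<gamma>) = coupling_cost p f \<gamma>23"
    unfolding coupling_cost_def g2[symmetric] H_def by (simp add: nn_integral_map_pmf)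
  have "coupling_cost p f \<gamma>13 = (\<integral>\<^sup>+ t. ennreal (\<bar>f (fst t) - f (snd (snd t))\<bar> powr p) \<partial>measure_pmf \<gamma>)"
    unfolding coupling_cost_def \<gamma>13_def by (simp add: nn_integral_map_pmf)
  also have "\<dots> \<le> (\<integral>\<^sup>+ t. ennreal ((F t + H t) powr p) \<partial>measure_pmf \<gamma>)"
  proof (intro nn_integral_mono ennreal_leI powr_mono2)
    fix t show "\<bar>f (fst t) - f (snd (snd t))\<bar> \<le> F t + H t" unfolding F_def H_def by linarith
  qed (use p in auto)
  also have "\<dots> \<le> ennreal ((enn2real (\<integral>\<^sup>+ t. ennreal (F t powr p) \<partial>measure_pmf \<gamma>) powr (1/p) +
      enn2real (\<integral>\<^sup>+ t. ennreal (H t powr p) \<partial>measure_pmf \<gamma>) powr (1/p)) powr p)"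
    using coupling_cost_finite[OF g12 fin(1,2), of p f] coupling_cost_finite[OF g23 fin(2,3), of p f]
    unfolding cF[symmetric] cH[symmetric] by (intro nn_integral_Minkowski[OF p]) (auto simp: F_def H_def)
  finally show ?thesis using c13 unfolding cF cH by blast
qed

lemma le_powr_add_powr_if_eps:
  fixes a b c r :: real
  assumes "a \<ge> 0" "b \<ge> 0" "r > 0" and eps: "\<And>e. e > 0 \<Longrightarrow> c \<le> (a + e) powr r + (b + e) powr r"
  shows "c \<le> a powr r + b powr r"
proof -
  have "((\<lambda>e. (a + e) powr r + (b + e) powr r) \<longlongrightarrow> (a + 0) powr r + (b + 0) powr r) (at_right 0)"
    using assms eventually_mono[OF eventually_at_right_less[of "0::real"]]
    by (intro tendsto_intros tendsto_powr') auto
  moreover have "\<forall>\<^sub>F e in at_right 0. c \<le> (a + e) powr r + (b + e) powr r"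
    using eventually_at_right_less[of "0::real"] by (rule eventually_mono) (rule eps)
  ultimately have "c \<le> (a + 0) powr r + (b + 0) powr r"
    by (rule tendsto_lowerbound) simp
  then show ?thesis by simp
qed

lemma pmf_wasserstein_triangle:
  assumes p: "p \<ge> 1"
    and fin: "finite (set_pmf G1)" "finite (set_pmf G2)" "finite (set_pmf G3)"
  shows "enn2real (pmf_wasserstein p f G1 G3) powr (1/p) \<le>
     enn2real (pmf_wasserstein p f G1 G2) powr (1/p) + enn2real (pmf_wasserstein p f G2 G3) powr (1/p)"
proof -
  define a where "a = enn2real (pmf_wasserstein p f G1 G2)"
  define b where "b = enn2real (pmf_wasserstein p f G2 G3)"
  define c where "c = enn2real (pmf_wasserstein p f G1 G3)"
  have ab0: "a \<ge> 0" "b \<ge> 0" unfolding a_def b_def by auto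
  have Wa: "pmf_wasserstein p f G1 G2 = ennreal a"
    unfolding a_def using pmf_wasserstein_finite[OF fin(1,2)] by (simp add: less_top ennreal_enn2real_if)
  have Wb: "pmf_wasserstein p f G2 G3 = ennreal b"
    unfolding b_def using pmf_wasserstein_finite[OF fin(2,3)] by (simp add: less_top ennreal_enn2real_if)
  have approx: "c powr (1/p) \<le> (a + e) powr (1/p) + (b + e) powr (1/p)" if e: "e > 0" for e
  proof -
    obtain \<gamma>12 where g12: "\<gamma>12 \<in> pmf_couplings G1 G2" "coupling_cost p f \<gamma>12 < ennreal a + ennreal e"
      using INF_approx_ennreal[OF e Wa[unfolded pmf_wasserstein_def, symmetric]] by auto
    obtain \<gamma>23 where g23: "\<gamma>23 \<in> pmf_couplings G2 G3" "coupling_cost p f \<gamma>23 < ennreal b + ennreal e"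
      using INF_approx_ennreal[OF e Wb[unfolded pmf_wasserstein_def, symmetric]] by auto
    have c12: "enn2real (coupling_cost p f \<gamma>12) \<le> a + e" and c23: "enn2real (coupling_cost p f \<gamma>23) \<le> b + e"
      using g12(2) g23(2) e ab0 by (auto simp flip: ennreal_plus intro!: enn2real_leI)
    obtain \<gamma>13 where g13: "\<gamma>13 \<in> pmf_couplings G1 G3" "coupling_cost p f \<gamma>13 \<le>
       ennreal ((enn2real (coupling_cost p f \<gamma>12) powr (1/p) + enn2real (coupling_cost p f \<gamma>23) powr (1/p)) powr p)"
      using coupling_cost_glue[OF p g12(1) g23(1) fin] by blast
    have "c \<le> enn2real (coupling_cost p f \<gamma>13)"
      unfolding c_def using coupling_cost_finite[OF g13(1) fin(1,3)]
      by (intro enn2real_mono pmf_wasserstein_le_coupling_cost[OF g13(1)]) auto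
    also have "\<dots> \<le> (enn2real (coupling_cost p f \<gamma>12) powr (1/p) + enn2real (coupling_cost p f \<gamma>23) powr (1/p)) powr p"
      using g13(2) by (intro enn2real_leI) auto
    also have "\<dots> \<le> ((a + e) powr (1/p) + (b + e) powr (1/p)) powr p"
      using p c12 c23 by (intro powr_mono2 add_mono) auto
    finally have "c powr (1/p) \<le> (((a + e) powr (1/p) + (b + e) powr (1/p)) powr p) powr (1/p)"
      using p unfolding c_def by (intro powr_mono2) auto
    also have "\<dots> = (a + e) powr (1/p) + (b + e) powr (1/p)"
      using p by (simp add: powr_powr)
    finally show ?thesis .
  qed
  then show ?thesis
    unfolding a_def b_def c_def using p by (rule_tac le_powr_add_powr_if_eps) auto
qed

text \<open>Mass in excess at \<open>\<theta>\<close> has to be moved to other points of \<open>G\<^sub>2\<close>, each at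
  distance at least \<open>\<delta>\<close> in the projection \<open>f\<close>.\<close>
lemma coupling_cost_ge_excess_mass:
  assumes "p > 0" "\<delta> > 0" and \<gamma>: "\<gamma> \<in> pmf_couplings G1 G2"
    and far: "\<And>\<theta>'. \<theta>' \<in> set_pmf G2 \<Longrightarrow> \<theta>' \<noteq> \<theta> \<Longrightarrow> \<delta> \<le> \<bar>f \<theta> - f \<theta>'\<bar>"
  shows "ennreal (\<delta> powr p * (pmf G1 \<theta> - pmf G2 \<theta>)) \<le> coupling_cost p f \<gamma>"
proof (cases "pmf G2 \<theta> \<le> pmf G1 \<theta>")
  case True
  define E where "E = {z. fst z = \<theta> \<and> snd z \<noteq> \<theta>}"
  have m: "map_pmf fst \<gamma> = G1" "map_pmf snd \<gamma> = G2" using \<gamma> unfolding pmf_couplings_def by auto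
  have "pmf G1 \<theta> = measure_pmf.prob \<gamma> E + measure_pmf.prob \<gamma> {(\<theta>, \<theta>)}"
  proof -
    have "fst -` {\<theta>} = E \<union> {(\<theta>, \<theta>)}" "E \<inter> {(\<theta>, \<theta>)} = {}" unfolding E_def by auto
    then show ?thesis
      unfolding m(1)[symmetric] pmf_map
      using measure_pmf.finite_measure_Union[where M = \<gamma> and A = E and B = "{(\<theta>, \<theta>)}"] by simp
  qed
  moreover have "measure_pmf.prob \<gamma> {(\<theta>, \<theta>)} \<le> pmf G2 \<theta>"
    unfolding m(2)[symmetric] pmf_map by (intro measure_pmf.finite_measure_mono) auto
  ultimately have "ennreal (pmf G1 \<theta> - pmf G2 \<theta>) \<le> emeasure (measure_pmf \<gamma>) E"
    by (simp add: measure_pmf.emeasure_eq_measure ennreal_leI)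
  then have "ennreal (\<delta> powr p * (pmf G1 \<theta> - pmf G2 \<theta>)) \<le> ennreal (\<delta> powr p) * emeasure (measure_pmf \<gamma>) E"
    using True by (simp add: ennreal_mult mult_left_mono)
  also have "\<dots> = (\<integral>\<^sup>+ z. ennreal (\<delta> powr p) * indicator E z \<partial>measure_pmf \<gamma>)"
    by (simp add: nn_integral_cmult_indicator)
  also have "\<dots> \<le> coupling_cost p f \<gamma>"
    unfolding coupling_cost_def
  proof (intro nn_integral_mono_AE, unfold AE_measure_pmf_iff, intro ballI)
    fix z assume z: "z \<in> set_pmf \<gamma>"
    show "ennreal (\<delta> powr p) * indicator E z \<le> ennreal (\<bar>f (fst z) - f (snd z)\<bar> powr p)"
    proof (cases "z \<in> E")
      case True
      then have "\<delta> \<le> \<bar>f (fst z) - f (snd z)\<bar>"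
        using set_pmf_coupling[OF \<gamma>] z far unfolding E_def by auto
      then show ?thesis using True assms(1,2) by (simp add: ennreal_leI powr_mono2)
    qed simp
  qed
  finally show ?thesis .
next
  case False
  then have "\<delta> powr p * (pmf G1 \<theta> - pmf G2 \<theta>) \<le> 0" by (simp add: mult_nonneg_nonpos)
  then show ?thesis by (simp add: ennreal_neg)
qed

lemma pmf_wasserstein_eq_0_imp_eq:
  fixes f :: "'a \<Rightarrow> real"
  assumes "p > 0" and fin: "finite (set_pmf G1)" "finite (set_pmf G2)"
    and inj: "inj_on f (set_pmf G1 \<union> set_pmf G2)" and zero: "pmf_wasserstein p f G1 G2 = 0"
  shows "G1 = G2"
proof (rule ccontr)
  assume "G1 \<noteq> G2"
  then obtain \<theta> where less: "pmf G2 \<theta> < pmf G1 \<theta>" using pmf_neq_exists_less[of G2 G1] by auto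
  then have "\<theta> \<in> set_pmf G1" by (metis pmf_nonneg not_le pmf_eq_0_set_pmf)
  define D where "D = insert 1 ((\<lambda>\<theta>'. \<bar>f \<theta> - f \<theta>'\<bar>) ` (set_pmf G2 - {\<theta>}))"
  have "finite D" unfolding D_def using fin by auto
  moreover have "\<forall>d\<in>D. d > 0"
    using inj \<open>\<theta> \<in> set_pmf G1\<close> unfolding D_def inj_on_def by auto
  ultimately have "Min D > 0" unfolding D_def by simp
  have far: "Min D \<le> \<bar>f \<theta> - f \<theta>'\<bar>" if "\<theta>' \<in> set_pmf G2" "\<theta>' \<noteq> \<theta>" for \<theta>'
    using \<open>finite D\<close> that unfolding D_def by (intro Min_le) auto
  have "ennreal (Min D powr p * (pmf G1 \<theta> - pmf G2 \<theta>)) \<le> coupling_cost p f \<gamma>"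
    if "\<gamma> \<in> pmf_couplings G1 G2" for \<gamma>
    using coupling_cost_ge_excess_mass[where f = f and \<theta> = \<theta>, OF \<open>p > 0\<close> \<open>Min D > 0\<close> that far] .
  then have "ennreal (Min D powr p * (pmf G1 \<theta> - pmf G2 \<theta>)) \<le> pmf_wasserstein p f G1 G2"
    unfolding pmf_wasserstein_def by (rule INF_greatest)
  then show False using zero less \<open>Min D > 0\<close> by simp
qed

lemma wasserstein_pp_commute: "wasserstein_pp p \<alpha> \<beta> = wasserstein_pp p \<beta> \<alpha>"
proof -
  have "wasserstein_pp p \<beta> \<alpha> \<le> wasserstein_pp p \<alpha> \<beta>" for \<alpha> \<beta>
    unfolding wasserstein_pp_def
  proof (rule INF_greatest)
    fix \<pi> assume \<pi>: "\<pi> \<in> couplings \<alpha> \<beta>"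
    then have sets: "sets \<pi> = sets borel" and ps: "prob_space \<pi>"
      and marg: "distr \<pi> borel fst = \<alpha>" "distr \<pi> borel snd = \<beta>"
      unfolding couplings_def by auto
    have swap: "prod.swap \<in> measurable \<pi> (borel :: (real \<times> real) measure)"
      using measurable_cong_sets[OF sets refl]
      by (metis borel_measurable_continuous_onI continuous_on_swap)
    define \<pi>' where "\<pi>' = distr \<pi> borel prod.swap"
    have "\<pi>' \<in> couplings \<beta> \<alpha>"
      unfolding couplings_def \<pi>'_def using swap prob_space.prob_space_distr[OF ps swap]
      by (simp add: distr_distr comp_def marg[symmetric] borel_measurable_fst_real borel_measurable_snd_real)
    then have "(INF \<pi>\<in>couplings \<beta> \<alpha>. \<integral>\<^sup>+ z. ennreal (\<bar>fst z - snd z\<bar> powr p) \<partial>\<pi>)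
        \<le> (\<integral>\<^sup>+ z. ennreal (\<bar>fst z - snd z\<bar> powr p) \<partial>\<pi>')"
      by (rule INF_lower)
    also have "\<dots> = (\<integral>\<^sup>+ z. ennreal (\<bar>fst z - snd z\<bar> powr p) \<partial>\<pi>)"
      unfolding \<pi>'_def using swap
      by (subst nn_integral_distr) (simp_all add: borel_measurable_dist_powr abs_minus_commute)
    finally show "(INF \<pi>\<in>couplings \<beta> \<alpha>. \<integral>\<^sup>+ z. ennreal (\<bar>fst z - snd z\<bar> powr p) \<partial>\<pi>)
        \<le> (\<integral>\<^sup>+ z. ennreal (\<bar>fst z - snd z\<bar> powr p) \<partial>\<pi>)" .
  qed
  from this[of \<alpha> \<beta>] this[of \<beta> \<alpha>] show ?thesis by (rule antisym)
qed

section \<open>Uniform measures on spheres\<close>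

lemma AE_lborel_inner_neq_0:
  fixes c :: "'a::euclidean_space"
  assumes "c \<noteq> 0"
  shows "AE x in lborel. c \<bullet> x \<noteq> 0"
proof -
  have "negligible {x. c \<bullet> x = 0}" using assms by (intro negligible_hyperplane) auto
  moreover have "{x. c \<bullet> x = 0} \<in> sets lborel" using closed_hyperplane[of c 0] by simp
  ultimately have "{x. c \<bullet> x = 0} \<in> null_sets lborel"
    using null_sets_completion_iff negligible_iff_null_sets by blast
  then show ?thesis by (rule AE_I') auto
qed

lemma prob_space_uniform_ball: "prob_space (uniform_measure lborel (ball (0::'a::euclidean_space) 1))"
proof (rule prob_space_uniform_measure)
  show "emeasure lborel (ball (0::'a) 1) \<noteq> \<infinity>"
    using emeasure_lborel_ball_finite by (simp add: less_top)
  have "unit_ball_vol (real DIM('a)) > 0" by (rule unit_ball_vol_pos) simp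
  then have "unit_ball_vol (real DIM('a)) \<noteq> 0" by linarith
  then show "emeasure lborel (ball (0::'a) 1) \<noteq> 0" by (simp add: emeasure_ball)
qed

lemma sets_uniform_ball [measurable_cong]:
  "sets (uniform_measure lborel (ball (0::'a::euclidean_space) 1)) = sets borel"
  by simp

lemma borel_measurable_normalize: "(\<lambda>x::'a::euclidean_space. x /\<^sub>R norm x) \<in> borel_measurable borel"
  by (intro borel_measurable_scaleR borel_measurable_inverse borel_measurable_norm measurable_ident_sets) auto

lemma continuous_on_sym_part: "continuous_on UNIV (sym_part :: real^'n^'n \<Rightarrow> _)"
  unfolding sym_part_def transpose_def
  by (intro continuous_intros) (auto intro!: continuous_on_vec_lambda continuous_intros)

lemma borel_measurable_normalize_sym_part:
  "(\<lambda>Z::real^'n^'n. sym_part Z /\<^sub>R norm (sym_part Z)) \<in> borel_measurable borel"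
  using borel_measurable_continuous_onI[OF continuous_on_sym_part] by measurable

lemma prob_space_unif_sphere: "prob_space (unif_sphere :: 'a::euclidean_space measure)"
  unfolding unif_sphere_def
  by (rule prob_space.prob_space_distr[OF prob_space_uniform_ball])
    (simp add: borel_measurable_normalize measurable_cong_sets[OF sets_uniform_ball refl])

lemma sets_unif_sphere [measurable_cong]: "sets (unif_sphere :: 'a::euclidean_space measure) = sets borel"
  unfolding unif_sphere_def by simp

lemma prob_space_unif_sym_sphere: "prob_space (unif_sym_sphere :: (real^'n^'n) measure)"
  unfolding unif_sym_sphere_def
  by (rule prob_space.prob_space_distr[OF prob_space_uniform_ball])
    (simp add: borel_measurable_normalize_sym_part measurable_cong_sets[OF sets_uniform_ball refl])

lemma sets_unif_sym_sphere [measurable_cong]: "sets (unif_sym_sphere :: (real^'n^'n) measure) = sets borel"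
  unfolding unif_sym_sphere_def by simp

lemma AE_unif_sphere:
  assumes "{x. P x} \<in> sets borel" and "AE x in lborel. P (x /\<^sub>R norm x)"
  shows "AE v in (unif_sphere :: 'a::euclidean_space measure). P v"
  unfolding unif_sphere_def using assms
  by (subst AE_distr_iff)
    (auto simp: borel_measurable_normalize measurable_cong_sets[OF sets_uniform_ball refl]
      intro: AE_uniform_measureI)

lemma AE_unif_sym_sphere:
  assumes "{A. P A} \<in> sets borel" and "AE Z in lborel. P (sym_part Z /\<^sub>R norm (sym_part Z))"
  shows "AE A in (unif_sym_sphere :: (real^'n^'n) measure). P A"
  unfolding unif_sym_sphere_def using assms
  by (subst AE_distr_iff)
    (auto simp: borel_measurable_normalize_sym_part measurable_cong_sets[OF sets_uniform_ball refl]
      intro: AE_uniform_measureI)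

lemma inverse_norm_mult_norm_le_1: "inverse (norm x) * norm x \<le> (1::real)"
  by (cases "norm x = 0") auto

lemma AE_unif_sphere_norm_le_1: "AE v in (unif_sphere :: 'a::euclidean_space measure). norm v \<le> 1"
  by (rule AE_unif_sphere) (auto simp: inverse_norm_mult_norm_le_1 borel_closed closed_Collect_le continuous_intros)

lemma AE_unif_sym_sphere_norm_le_1: "AE A in (unif_sym_sphere :: (real^'n^'n) measure). norm A \<le> 1"
  by (rule AE_unif_sym_sphere) (auto simp: inverse_norm_mult_norm_le_1 borel_closed closed_Collect_le continuous_intros)

lemma AE_unif_sphere_inner_neq_0:
  fixes c :: "'a::euclidean_space"
  assumes "c \<noteq> 0"
  shows "AE v in unif_sphere. v \<bullet> c \<noteq> 0"
proof (rule AE_unif_sphere)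
  show "AE x in lborel. (x /\<^sub>R norm x) \<bullet> c \<noteq> 0"
    using AE_lborel_inner_neq_0[OF assms] by eventually_elim (auto simp: inner_commute)
qed (auto intro: borel_open open_Collect_neq continuous_intros)

lemma trace_mult_symmetric:
  fixes A L :: "real^'n^'n"
  assumes "transpose L = L"
  shows "trace (A ** L) = A \<bullet> L"
proof -
  have "L $ k $ i = L $ i $ k" for i k
    using arg_cong[OF assms, of "\<lambda>M. M $ k $ i"] by (simp add: transpose_def)
  then show ?thesis by (simp add: trace_def matrix_matrix_mult_def inner_vec_def)
qed

lemma inner_sym_part:
  fixes Z L :: "real^'n^'n"
  assumes "transpose L = L"
  shows "sym_part Z \<bullet> L = Z \<bullet> L"
proof -
  have "transpose Z \<bullet> L = (\<Sum>i\<in>UNIV. \<Sum>k\<in>UNIV. Z $ k $ i * L $ i $ k)"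
    by (simp add: inner_vec_def transpose_def)
  also have "\<dots> = (\<Sum>k\<in>UNIV. \<Sum>i\<in>UNIV. Z $ k $ i * L $ k $ i)"
    using arg_cong[OF assms, of "\<lambda>M. M $ _ $ _"] by (subst sum.swap) (simp add: transpose_def)
  also have "\<dots> = Z \<bullet> L" by (simp add: inner_vec_def)
  finally show ?thesis unfolding sym_part_def by (simp add: inner_add_left)
qed

lemma AE_unif_sym_sphere_trace_neq_0:
  fixes M :: "real^'n^'n"
  assumes "M \<noteq> 0" "transpose M = M"
  shows "AE A in unif_sym_sphere. trace (A ** M) \<noteq> 0"
proof (rule AE_unif_sym_sphere)
  show "AE Z in lborel. trace ((sym_part Z /\<^sub>R norm (sym_part Z)) ** M) \<noteq> 0"
    using AE_lborel_inner_neq_0[OF assms(1)]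
  proof eventually_elim
    fix Z :: "real^'n^'n" assume "M \<bullet> Z \<noteq> 0"
    then have "sym_part Z \<bullet> M \<noteq> 0" using inner_sym_part[OF assms(2)] by (simp add: inner_commute)
    then show "trace ((sym_part Z /\<^sub>R norm (sym_part Z)) ** M) \<noteq> 0"
      by (auto simp: trace_mult_symmetric[OF assms(2)])
  qed
qed (auto simp: trace_mult_symmetric[OF assms(2)] intro: borel_open open_Collect_neq continuous_intros)

section \<open>The sliced distance between mixing measures\<close>

definition mix_sw_directions :: "((real^2) \<times> (real^'n) \<times> (real^'n^'n)) measure" where
  "mix_sw_directions = unif_sphere \<Otimes>\<^sub>M (unif_sphere \<Otimes>\<^sub>M unif_sym_sphere)"

definition slice :: "(real^2) \<times> (real^'n) \<times> (real^'n^'n) \<Rightarrow> (real^'n) \<times> (real^'n^'n) \<Rightarrow> real" where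
  "slice u = proj_V (fst u) (fst (snd u)) (snd (snd u))"

lemma sets_unif_sphere_sym_sphere:
  "sets (unif_sphere \<Otimes>\<^sub>M unif_sym_sphere :: ((real^'n) \<times> (real^'n^'n)) measure) = sets borel"
  using sets_pair_measure_cong[OF sets_unif_sphere sets_unif_sym_sphere] by (simp only: borel_prod)

lemma sets_mix_sw_directions: "sets (mix_sw_directions :: ((real^2) \<times> (real^'n) \<times> (real^'n^'n)) measure) = sets borel"
  unfolding mix_sw_directions_def
  using sets_pair_measure_cong[OF sets_unif_sphere sets_unif_sphere_sym_sphere] by (simp only: borel_prod)

lemma prob_space_mix_sw_directions: "prob_space (mix_sw_directions :: ((real^2) \<times> (real^'n) \<times> (real^'n^'n)) measure)"
  unfolding mix_sw_directions_def
  by (intro prob_space_pair prob_space_unif_sphere prob_space_unif_sym_sphere)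

text \<open>Almost-everywhere statements on the directions, proved for \<open>(v, A)\<close> first and
  then for \<open>w\<close> given \<open>(v, A)\<close>; the order matters for separation, where the
  admissible \<open>w\<close> depend on \<open>(v, A)\<close>.\<close>
lemma AE_mix_sw_directionsI:
  fixes P :: "(real^2) \<times> (real^'n) \<times> (real^'n^'n) \<Rightarrow> bool"
  assumes P: "{u. P u} \<in> sets borel" and Q: "{y. Q y} \<in> sets borel"
    and Q_AE: "AE v in unif_sphere. AE A in unif_sym_sphere. Q (v, A)"
    and P_AE: "\<And>y. Q y \<Longrightarrow> AE w in unif_sphere. P (w, y)"
  shows "AE u in mix_sw_directions. P u"
proof -
  let ?N = "unif_sphere \<Otimes>\<^sub>M unif_sym_sphere :: ((real^'n) \<times> (real^'n^'n)) measure"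
  let ?U = "(unif_sphere :: (real^2) measure) \<Otimes>\<^sub>M ?N"
  interpret N: pair_sigma_finite "unif_sphere :: (real^'n) measure" "unif_sym_sphere :: (real^'n^'n) measure"
    by (intro pair_sigma_finite.intro prob_space_imp_sigma_finite prob_space_unif_sphere
        prob_space_unif_sym_sphere)
  interpret U: pair_sigma_finite "unif_sphere :: (real^2) measure" ?N
    by (intro pair_sigma_finite.intro prob_space_imp_sigma_finite prob_space_unif_sphere
        prob_space_pair prob_space_unif_sym_sphere)
  have space_N: "space ?N = UNIV" and space_U: "space ?U = UNIV"
    by (simp_all add: space_pair_measure sets_eq_imp_space_eq[OF sets_unif_sphere]
        sets_eq_imp_space_eq[OF sets_unif_sym_sphere])
  have "{y \<in> space ?N. Q (fst y, snd y)} \<in> sets ?N"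
    using Q by (simp add: sets_unif_sphere_sym_sphere space_N)
  then have "AE y in ?N. Q y" using N.AE_pair_iff Q_AE by simp
  then have "AE y in ?N. AE w in unif_sphere. P (w, y)" by eventually_elim (rule P_AE)
  moreover have meas: "{x \<in> space ?U. P (fst x, snd x)} \<in> sets ?U"
    using P space_U by (simp add: sets_mix_sw_directions[unfolded mix_sw_directions_def])
  ultimately have "AE w in unif_sphere. AE y in ?N. P (w, y)"
    using U.AE_commute[of "\<lambda>w y. P (w, y)"] by simp
  then show ?thesis
    unfolding mix_sw_directions_def using U.AE_pair_iff[of "\<lambda>w y. P (w, y)"] meas by simp
qed

lemma AE_mix_sw_directions_norm_le_1:
  "AE u in (mix_sw_directions :: ((real^2) \<times> (real^'n) \<times> (real^'n^'n)) measure).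
     norm (fst u) \<le> 1 \<and> norm (fst (snd u)) \<le> 1 \<and> norm (snd (snd u)) \<le> 1"
proof (rule AE_mix_sw_directionsI[where Q = "\<lambda>y. norm (fst y) \<le> 1 \<and> norm (snd y) \<le> 1"])
  show "AE v in unif_sphere. AE A in unif_sym_sphere. norm (fst (v, A)) \<le> 1 \<and> norm (snd (v, A)) \<le> 1"
    using AE_unif_sphere_norm_le_1 AE_unif_sym_sphere_norm_le_1 by (auto elim: eventually_mono)
  show "AE w in unif_sphere. norm (fst (w, y)) \<le> 1 \<and> norm (fst (snd (w, y))) \<le> 1 \<and> norm (snd (snd (w, y))) \<le> 1"
    if "norm (fst y) \<le> 1 \<and> norm (snd y) \<le> 1" for y :: "(real^'n) \<times> (real^'n^'n)"
    using AE_unif_sphere_norm_le_1 that by (auto elim: eventually_mono)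
qed (auto intro!: borel_closed closed_Collect_conj closed_Collect_le continuous_intros)

lemma continuous_on_slice: "continuous_on UNIV (\<lambda>u. slice u \<theta>)"
  unfolding slice_def proj_V_def trace_def matrix_matrix_mult_def
  by (intro continuous_intros)

lemma slice_diff:
  assumes "spd (snd \<theta>)" "spd (snd \<theta>')"
  shows "slice u \<theta> - slice u \<theta>' = fst u $ 1 * ((fst \<theta> - fst \<theta>') \<bullet> fst (snd u)) +
    fst u $ 2 * (snd (snd u) \<bullet> (mat_log (snd \<theta>) - mat_log (snd \<theta>')))"
  unfolding slice_def proj_V_def
  using trace_mult_symmetric[OF symmetric_mat_log[OF assms(1)]]
    trace_mult_symmetric[OF symmetric_mat_log[OF assms(2)]]
  by (simp add: inner_diff_left inner_diff_right algebra_simps)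

lemma AE_unif_sphere_sym_sphere_inner_neq_0:
  fixes c :: "real^'n" and M :: "real^'n^'n"
  assumes "transpose M = M" and "c \<noteq> 0 \<or> M \<noteq> 0"
  shows "AE v in unif_sphere. AE A in unif_sym_sphere. c \<bullet> v \<noteq> 0 \<or> A \<bullet> M \<noteq> 0"
proof (cases "c = 0")
  case False
  show ?thesis using AE_unif_sphere_inner_neq_0[OF False]
    by eventually_elim (simp add: inner_commute)
next
  case True
  then have "M \<noteq> 0" using assms(2) by simp
  then have "AE A in unif_sym_sphere. trace (A ** M) \<noteq> 0"
    by (rule AE_unif_sym_sphere_trace_neq_0[OF _ assms(1)])
  then have "AE A in unif_sym_sphere. A \<bullet> M \<noteq> 0" by (simp add: trace_mult_symmetric[OF assms(1)])
  then show ?thesis by (simp add: eventually_mono)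
qed

text \<open>Two distinct atoms are separated by almost every slice: for a.e. \<open>(v, A)\<close> the
  vector \<open>(\<langle>\<mu> - \<mu>', v\<rangle>, \<langle>A, log \<Sigma> - log \<Sigma>'\<rangle>)\<close> is nonzero (injectivity
  of the matrix logarithm), and then a.e. \<open>w\<close> is not orthogonal to it.\<close>
lemma AE_slice_neq:
  fixes \<theta> \<theta>' :: "(real^'n) \<times> (real^'n^'n)"
  assumes spd: "spd (snd \<theta>)" "spd (snd \<theta>')" and "\<theta> \<noteq> \<theta>'"
  shows "AE u in mix_sw_directions. slice u \<theta> \<noteq> slice u \<theta>'"
proof -
  define c where "c = fst \<theta> - fst \<theta>'"
  define M where "M = mat_log (snd \<theta>) - mat_log (snd \<theta>')"
  define Q where "Q y \<longleftrightarrow> c \<bullet> fst y \<noteq> 0 \<or> snd y \<bullet> M \<noteq> 0" for y :: "(real^'n) \<times> (real^'n^'n)"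
  have M_sym: "transpose M = M"
    unfolding M_def using symmetric_mat_log[OF spd(1)] symmetric_mat_log[OF spd(2)]
    by (simp add: transpose_def vec_eq_iff)
  have "c \<noteq> 0 \<or> M \<noteq> 0"
    using \<open>\<theta> \<noteq> \<theta>'\<close> inj_onD[OF mat_log_inj_on_spd] spd unfolding c_def M_def by (auto simp: prod_eq_iff)
  then have "AE v in unif_sphere. AE A in unif_sym_sphere. Q (v, A)"
    unfolding Q_def using AE_unif_sphere_sym_sphere_inner_neq_0[OF M_sym] by simp
  moreover have "AE w in unif_sphere. slice (w, y) \<theta> \<noteq> slice (w, y) \<theta>'" if "Q y" for y
  proof -
    have "vector [c \<bullet> fst y, snd y \<bullet> M] \<noteq> (0 :: real^2)"
      using that unfolding Q_def by (metis vector_2 zero_index)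
    then have "AE w in unif_sphere. (w :: real^2) \<bullet> vector [c \<bullet> fst y, snd y \<bullet> M] \<noteq> 0"
      by (rule AE_unif_sphere_inner_neq_0)
    then show ?thesis
    proof eventually_elim
      case (elim w)
      then have "slice (w, y) \<theta> - slice (w, y) \<theta>' \<noteq> 0"
        unfolding slice_diff[OF spd] c_def M_def by (simp add: inner_vec_def sum_2 vector_2)
      then show ?case by simp
    qed
  qed
  moreover have "{y. Q y} \<in> sets borel"
    unfolding Q_def by (intro borel_open open_Collect_disj open_Collect_neq continuous_intros)
  moreover have "{u. slice u \<theta> \<noteq> slice u \<theta>'} \<in> sets borel"
    by (intro borel_open open_Collect_neq continuous_on_slice)
  ultimately show ?thesis by (intro AE_mix_sw_directionsI[where Q = Q])
qed

lemma abs_slice_le: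
  fixes \<theta> :: "(real^'n) \<times> (real^'n^'n)"
  assumes "spd (snd \<theta>)" "norm (fst u) \<le> 1" "norm (fst (snd u)) \<le> 1" "norm (snd (snd u)) \<le> 1"
  shows "\<bar>slice u \<theta>\<bar> \<le> norm (fst \<theta>) + norm (mat_log (snd \<theta>))"
proof -
  let ?w = "fst u" and ?v = "fst (snd u)" and ?A = "snd (snd u)" and ?L = "mat_log (snd \<theta>)"
  have "\<bar>slice u \<theta>\<bar> \<le> \<bar>?w $ 1\<bar> * \<bar>fst \<theta> \<bullet> ?v\<bar> + \<bar>?w $ 2\<bar> * \<bar>?A \<bullet> ?L\<bar>"
    unfolding slice_def proj_V_def trace_mult_symmetric[OF symmetric_mat_log[OF assms(1)]]
    by (simp add: abs_mult[symmetric] abs_triangle_ineq)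
  also have "\<dots> \<le> 1 * (norm (fst \<theta>) * 1) + 1 * (1 * norm ?L)"
  proof (intro add_mono mult_mono)
    show "\<bar>?w $ 1\<bar> \<le> 1" "\<bar>?w $ 2\<bar> \<le> 1"
      using component_le_norm_cart[of ?w] assms order_trans by blast+
    show "\<bar>fst \<theta> \<bullet> ?v\<bar> \<le> norm (fst \<theta>) * 1"
      using Cauchy_Schwarz_ineq2[of "fst \<theta>" ?v] assms(3) by (meson mult_left_mono norm_ge_zero order_trans)
    show "\<bar>?A \<bullet> ?L\<bar> \<le> 1 * norm ?L"
      using Cauchy_Schwarz_ineq2[of ?A ?L] assms(4) by (meson mult_right_mono norm_ge_zero order_trans)
  qed auto
  finally show ?thesis by simp
qed

lemma mix_sw_pp_eq_nn_integral:
  assumes "finite (set_pmf G1)" "finite (set_pmf G2)"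
  shows "mix_sw_pp p G1 G2 = (\<integral>\<^sup>+ u. pmf_wasserstein p (slice u) G1 G2 \<partial>mix_sw_directions)"
  unfolding mix_sw_pp_def mix_sw_directions_def push_def slice_def
  by (intro nn_integral_cong wasserstein_pp_distr_eq_pmf_wasserstein assms)

lemma borel_measurable_pmf_wasserstein_slice:
  assumes "p > 0" "finite (set_pmf G1)" "finite (set_pmf G2)"
  shows "(\<lambda>u. pmf_wasserstein p (slice u) G1 G2) \<in> borel_measurable mix_sw_directions"
  by (rule borel_measurable_pmf_wasserstein[OF continuous_on_slice assms sets_mix_sw_directions])

lemma mix_sw_pp_finite:
  fixes G1 G2 :: "((real^'n) \<times> (real^'n^'n)) pmf"
  assumes "p > 0" and m: "mixing_measure G1" "mixing_measure G2"
  shows "mix_sw_pp p G1 G2 < \<infinity>"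
proof -
  define S where "S = set_pmf G1 \<union> set_pmf G2"
  define R where "R = (\<Sum>\<theta>\<in>S. norm (fst \<theta>) + norm (mat_log (snd \<theta>)))"
  have fin: "finite (set_pmf G1)" "finite (set_pmf G2)" and spdS: "\<And>\<theta>. \<theta> \<in> S \<Longrightarrow> spd (snd \<theta>)"
    using m unfolding S_def mixing_measure_def by auto
  have "AE u in mix_sw_directions. pmf_wasserstein p (slice u) G1 G2 \<le> ennreal ((2 * R) powr p)"
    using AE_mix_sw_directions_norm_le_1
  proof eventually_elim
    case (elim u)
    show ?case
    proof (rule pmf_wasserstein_le_diameter[OF \<open>p > 0\<close>])
      fix \<theta> assume "\<theta> \<in> set_pmf G1 \<union> set_pmf G2"
      then have "\<theta> \<in> S" unfolding S_def .
      then have "\<bar>slice u \<theta>\<bar> \<le> norm (fst \<theta>) + norm (mat_log (snd \<theta>))"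
        using elim spdS by (intro abs_slice_le) auto
      also have "\<dots> \<le> R"
        unfolding R_def using \<open>\<theta> \<in> S\<close> fin unfolding S_def by (intro member_le_sum) auto
      finally show "\<bar>slice u \<theta>\<bar> \<le> R" .
    qed
  qed
  then have "mix_sw_pp p G1 G2 \<le>
      (\<integral>\<^sup>+ u. ennreal ((2 * R) powr p) \<partial>(mix_sw_directions :: ((real^2) \<times> (real^'n) \<times> (real^'n^'n)) measure))"
    unfolding mix_sw_pp_eq_nn_integral[OF fin] by (rule nn_integral_mono_AE)
  also have "\<dots> < \<infinity>"
    by (simp add: prob_space.emeasure_space_1[OF prob_space_mix_sw_directions])
  finally show ?thesis .
qed

lemma mix_sw_commute: "mix_sw p G1 G2 = mix_sw p G2 G1"
  unfolding mix_sw_def mix_sw_pp_def by (subst wasserstein_pp_commute) simp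

lemma mix_sw_self:
  assumes "p > 0" "mixing_measure G"
  shows "mix_sw p G G = 0"
  using assms unfolding mix_sw_def mixing_measure_def
  by (simp add: mix_sw_pp_eq_nn_integral pmf_wasserstein_self)

text \<open>If \<open>Mix-SW\<^sub>p(G\<^sub>1, G\<^sub>2) = 0\<close>, almost every slice has vanishing \<open>W\<^sub>p\<close>, and almost
  every slice is injective on the finitely many atoms; a slice with both properties
  forces \<open>G\<^sub>1 = G\<^sub>2\<close>.\<close>
lemma mix_sw_eq_0_imp_eq:
  fixes G1 G2 :: "((real^'n) \<times> (real^'n^'n)) pmf"
  assumes "p > 0" and m: "mixing_measure G1" "mixing_measure G2" and zero: "mix_sw p G1 G2 = 0"
  shows "G1 = G2"
proof -
  define S where "S = set_pmf G1 \<union> set_pmf G2"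
  have fin: "finite (set_pmf G1)" "finite (set_pmf G2)" and spdS: "\<And>\<theta>. \<theta> \<in> S \<Longrightarrow> spd (snd \<theta>)"
    using m unfolding S_def mixing_measure_def by auto
  have "enn2real (mix_sw_pp p G1 G2) = 0" using zero unfolding mix_sw_def by (simp add: powr_eq_0_iff)
  then have "mix_sw_pp p G1 G2 = 0"
    using mix_sw_pp_finite[OF \<open>p > 0\<close> m] by (auto simp: enn2real_eq_0_iff)
  then have "AE u in mix_sw_directions. pmf_wasserstein p (slice u) G1 G2 = 0"
    using borel_measurable_pmf_wasserstein_slice[OF \<open>p > 0\<close> fin]
    by (simp add: mix_sw_pp_eq_nn_integral[OF fin] nn_integral_0_iff_AE)
  moreover have "AE u in mix_sw_directions. \<forall>\<theta>\<in>S. \<forall>\<theta>'\<in>S. \<theta> \<noteq> \<theta>' \<longrightarrow> slice u \<theta> \<noteq> slice u \<theta>'"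
  proof (intro AE_finite_allI)
    fix \<theta> \<theta>' assume "\<theta> \<in> S" "\<theta>' \<in> S"
    then show "AE u in mix_sw_directions. \<theta> \<noteq> \<theta>' \<longrightarrow> slice u \<theta> \<noteq> slice u \<theta>'"
      using AE_slice_neq[OF spdS spdS] by (cases "\<theta> = \<theta>'") auto
  qed (use fin in \<open>simp_all add: S_def\<close>)
  ultimately have ae: "AE u in mix_sw_directions. pmf_wasserstein p (slice u) G1 G2 = 0 \<and> inj_on (slice u) S"
    by eventually_elim (auto simp: inj_on_def)
  have "\<exists>u. pmf_wasserstein p (slice u) G1 G2 = 0 \<and> inj_on (slice u) S"
  proof (rule ccontr)
    assume none: "\<nexists>u. pmf_wasserstein p (slice u) G1 G2 = 0 \<and> inj_on (slice u) S"
    from ae have "AE u in (mix_sw_directions :: ((real^2) \<times> (real^'n) \<times> (real^'n^'n)) measure). False"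
      by (rule eventually_mono) (use none in blast)
    then show False by (simp add: prob_space.AE_False[OF prob_space_mix_sw_directions])
  qed
  then obtain u where "pmf_wasserstein p (slice u) G1 G2 = 0" "inj_on (slice u) S" by blast
  then show ?thesis unfolding S_def by (intro pmf_wasserstein_eq_0_imp_eq[OF \<open>p > 0\<close> fin])
qed

definition slice_wasserstein ::
    "real \<Rightarrow> ((real^'n) \<times> (real^'n^'n)) pmf \<Rightarrow> ((real^'n) \<times> (real^'n^'n)) pmf \<Rightarrow>
      (real^2) \<times> (real^'n) \<times> (real^'n^'n) \<Rightarrow> real" where
  "slice_wasserstein p G1 G2 u = enn2real (pmf_wasserstein p (slice u) G1 G2) powr (1/p)"

lemma slice_wasserstein_powr:
  assumes "p > 0" "finite (set_pmf G1)" "finite (set_pmf G2)"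
  shows "ennreal (slice_wasserstein p G1 G2 u powr p) = pmf_wasserstein p (slice u) G1 G2"
  using assms pmf_wasserstein_finite[OF assms(2,3)]
  by (simp add: slice_wasserstein_def powr_powr less_top ennreal_enn2real_if)

lemma borel_measurable_slice_wasserstein:
  assumes "p > 0" "finite (set_pmf G1)" "finite (set_pmf G2)"
  shows "slice_wasserstein p G1 G2 \<in> borel_measurable mix_sw_directions"
  using borel_measurable_pmf_wasserstein_slice[OF assms]
  unfolding slice_wasserstein_def by measurable

lemma slice_wasserstein_triangle:
  assumes "p \<ge> 1" "finite (set_pmf G1)" "finite (set_pmf G2)" "finite (set_pmf G3)"
  shows "slice_wasserstein p G1 G3 u \<le> slice_wasserstein p G1 G2 u + slice_wasserstein p G2 G3 u"
  unfolding slice_wasserstein_def by (rule pmf_wasserstein_triangle[OF assms])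

lemma mix_sw_le_if_mix_sw_pp_le:
  assumes "p > 0" "0 \<le> x" and "mix_sw_pp p G1 G2 \<le> ennreal (x powr p)"
  shows "mix_sw p G1 G2 \<le> x"
proof -
  have "enn2real (mix_sw_pp p G1 G2) \<le> x powr p" using assms by (intro enn2real_leI) auto
  then have "mix_sw p G1 G2 \<le> (x powr p) powr (1/p)"
    unfolding mix_sw_def using assms by (intro powr_mono2) auto
  also have "\<dots> = x" using assms by (simp add: powr_powr)
  finally show ?thesis .
qed

text \<open>The triangle inequality of \<open>W\<^sub>p\<close> in each slice, followed by Minkowski's
  inequality in \<open>L\<^sup>p\<close> of the directions.\<close>
lemma mix_sw_triangle:
  fixes G1 G2 G3 :: "((real^'n) \<times> (real^'n^'n)) pmf"
  assumes p: "p \<ge> 1" and m: "mixing_measure G1" "mixing_measure G2" "mixing_measure G3"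
  shows "mix_sw p G1 G3 \<le> mix_sw p G1 G2 + mix_sw p G2 G3"
proof (rule mix_sw_le_if_mix_sw_pp_le)
  have fin: "finite (set_pmf G1)" "finite (set_pmf G2)" "finite (set_pmf G3)"
    using m unfolding mixing_measure_def by auto
  have mix_eq: "mix_sw_pp p G G' = (\<integral>\<^sup>+ u. ennreal (slice_wasserstein p G G' u powr p) \<partial>mix_sw_directions)"
    if "finite (set_pmf G)" "finite (set_pmf G')" for G G' :: "((real^'n) \<times> (real^'n^'n)) pmf"
    using p that by (simp add: mix_sw_pp_eq_nn_integral slice_wasserstein_powr)
  have "mix_sw_pp p G1 G3 \<le> (\<integral>\<^sup>+ u. ennreal ((slice_wasserstein p G1 G2 u + slice_wasserstein p G2 G3 u) powr p)
      \<partial>mix_sw_directions)"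
    unfolding mix_eq[OF fin(1,3)] using p slice_wasserstein_triangle[OF p fin]
    by (intro nn_integral_mono ennreal_leI powr_mono2) (auto simp: slice_wasserstein_def)
  also have "\<dots> \<le> ennreal ((enn2real (mix_sw_pp p G1 G2) powr (1/p) + enn2real (mix_sw_pp p G2 G3) powr (1/p)) powr p)"
    unfolding mix_eq[OF fin(1,2)] mix_eq[OF fin(2,3)]
    using mix_sw_pp_finite[of p G1 G2] mix_sw_pp_finite[of p G2 G3] p m
    by (intro nn_integral_Minkowski borel_measurable_slice_wasserstein fin)
      (auto simp: slice_wasserstein_def mix_eq fin)
  finally show "mix_sw_pp p G1 G3 \<le> ennreal ((mix_sw p G1 G2 + mix_sw p G2 G3) powr p)"
    unfolding mix_sw_def .
qed (use p in \<open>auto simp: mix_sw_def\<close>)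

lemma Metric_space_mix_sw:
  assumes "p \<ge> 1"
  shows "Metric_space (Collect mixing_measure :: ((real^'n) \<times> (real^'n^'n)) pmf set) (mix_sw p)"
proof
  show "0 \<le> mix_sw p G1 G2" for G1 G2 :: "((real^'n) \<times> (real^'n^'n)) pmf"
    unfolding mix_sw_def by simp
  show "mix_sw p G1 G2 = mix_sw p G2 G1" for G1 G2 :: "((real^'n) \<times> (real^'n^'n)) pmf"
    by (rule mix_sw_commute)
  show "mix_sw p G1 G2 = 0 \<longleftrightarrow> G1 = G2"
    if "G1 \<in> Collect mixing_measure" "G2 \<in> Collect mixing_measure" for G1 G2
    using that assms mix_sw_eq_0_imp_eq[of p G1 G2] mix_sw_self[of p G1] by auto
  show "mix_sw p G1 G3 \<le> mix_sw p G1 G2 + mix_sw p G2 G3"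
    if "G1 \<in> Collect mixing_measure" "G2 \<in> Collect mixing_measure" "G3 \<in> Collect mixing_measure"
    for G1 G2 G3
    using that assms by (intro mix_sw_triangle) auto
qed

lemma Metric_space_inj_on_image:
  assumes "Metric_space A d" and "inj_on g A"
  shows "Metric_space (g ` A) (\<lambda>x y. d (inv_into A g x) (inv_into A g y))"
proof -
  interpret Metric_space A d by fact
  show ?thesis
    by unfold_locales
      (auto simp: commute inv_into_f_f[OF assms(2)] triangle inj_on_eq_iff[OF assms(2)])
qed

theorem corollary1:
  fixes p :: real
  assumes "p \<ge> 1"
  shows "\<exists>D :: (real^'n) measure \<Rightarrow> (real^'n) measure \<Rightarrow> real.
           (\<forall>G1 G2. mixing_measure G1 \<longrightarrow> mixing_measure G2 \<longrightarrow>
              D (gmm G1) (gmm G2) = mix_sw p G1 G2) \<and>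
           Metric_space (gmm ` {G. mixing_measure G}) D"
proof -
  let ?inv = "inv_into (Collect mixing_measure) gmm"
  have "Metric_space (gmm ` Collect mixing_measure) (\<lambda>F1 F2. mix_sw p (?inv F1) (?inv F2))"
    by (rule Metric_space_inj_on_image[OF Metric_space_mix_sw[OF assms] inj_on_gmm])
  moreover have "?inv (gmm G) = G" if "mixing_measure G" for G :: "((real^'n) \<times> (real^'n^'n)) pmf"
    using inv_into_f_f[OF inj_on_gmm] that by blast
  ultimately show ?thesis by (intro exI[of _ "\<lambda>F1 F2. mix_sw p (?inv F1) (?inv F2)"]) auto
qed

end
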